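(* Let $(\{A_i\},\{B_j\},|\psi\rangle)$ be a quantum strategy on $H_1\otimes H_2$, and write $|\psi\rangle=\sum_k|k\rangle\otimes\lambda|k\rangle$ with respect to a fixed orthonormal basis $\{|k\rangle\}$ of $H_1$, where $\lambda:H_1\to H_2$ is linear. Let $\mathcal{B}_1$ and $\mathcal{B}_2$ be the $C^*$-algebras generated by $A_1,\dots,A_m$ and by $B_1,\dots,B_n$ respectively, and $\bar{\mathcal{B}}_1=\{\bar A: A\in\mathcal{B}_1\}$. Then the strategy is non-degenerate if and only if $\overline{\mathcal{B}_2\lambda H_1}=H_2$ and $\overline{\bar{\mathcal{B}}_1\lambda^*H_2}=H_1$, where bars over sets denote norm closure of the linear span.
   Context: A quantum strategy consists of separable Hilbert spaces $H_1,H_2$, a unit vector $|\psi\rangle\in H_1\otimes H_2$, bounded self-adjoint $A_1,\dots,A_m$ on $H_1$ and $B_1,\dots,B_n$ on $H_2$ with $A_i^2=I$, $B_j^2=I$. It is non-degenerate if there is no orthogonal projection $P\ne I$ on $H_1$ commuting with all $A_i$ with $(P\otimes I)|\psi\rangle=|\psi\rangle$, and no orthogonal projection $Q\ne I$ on $H_2$ commuting with all $B_j$ with $(I\otimes Q)|\psi\rangle=|\psi\rangle$. For an operator $A$ on $H_1$, $\bar A$ is the operator whose matrix in the basis $\{|k\rangle\}$ is the entrywise complex conjugate of that of $A$. *)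

theory Defs
  imports "HOL-Analysis.Analysis"
begin

text \<open>Concrete model: a separable Hilbert space with a fixed orthonormal basis
  indexed by a countable type 'a is l2('a); the fixed basis is the standard basis.
  Operators are functions on ('a => complex); only their behaviour on l2 matters.\<close>

definition l2 :: "('a \<Rightarrow> complex) set" where
  "l2 = {x. (\<lambda>k. (cmod (x k))\<^sup>2) summable_on UNIV}"

definition l2norm :: "('a \<Rightarrow> complex) \<Rightarrow> real" where
  "l2norm x = sqrt (infsum (\<lambda>k. (cmod (x k))\<^sup>2) UNIV)"

definition l2inner :: "('a \<Rightarrow> complex) \<Rightarrow> ('a \<Rightarrow> complex) \<Rightarrow> complex" where
  "l2inner x y = infsum (\<lambda>k. cnj (x k) * y k) UNIV"

type_synonym 'a op = "('a \<Rightarrow> complex) \<Rightarrow> ('a \<Rightarrow> complex)"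

definition bounded_op :: "'a op \<Rightarrow> bool" where
  "bounded_op T \<longleftrightarrow> (\<forall>x\<in>l2. T x \<in> l2)
     \<and> (\<forall>x\<in>l2. \<forall>y\<in>l2. T (\<lambda>k. x k + y k) = (\<lambda>k. T x k + T y k))
     \<and> (\<forall>x\<in>l2. \<forall>c. T (\<lambda>k. c * x k) = (\<lambda>k. c * T x k))
     \<and> (\<exists>C. \<forall>x\<in>l2. l2norm (T x) \<le> C * l2norm x)"

definition self_adjoint_op :: "'a op \<Rightarrow> bool" where
  "self_adjoint_op T \<longleftrightarrow> bounded_op T \<and> (\<forall>x\<in>l2. \<forall>y\<in>l2. l2inner (T x) y = l2inner x (T y))"

definition is_identity_op :: "'a op \<Rightarrow> bool" where
  "is_identity_op T \<longleftrightarrow> (\<forall>x\<in>l2. T x = x)"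

definition orth_proj :: "'a op \<Rightarrow> bool" where
  "orth_proj P \<longleftrightarrow> self_adjoint_op P \<and> (\<forall>x\<in>l2. P (P x) = P x)"

definition commutes_op :: "'a op \<Rightarrow> 'a op \<Rightarrow> bool" where
  "commutes_op S T \<longleftrightarrow> (\<forall>x\<in>l2. S (T x) = T (S x))"

text \<open>H1 (x) H2 = l2('k \<times> 'l); A (x) I and I (x) B acting on a vector.\<close>
definition tensor_left :: "'k op \<Rightarrow> ('k \<times> 'l \<Rightarrow> complex) \<Rightarrow> ('k \<times> 'l \<Rightarrow> complex)" where
  "tensor_left A psi = (\<lambda>(k, l). A (\<lambda>k'. psi (k', l)) k)"

definition tensor_right :: "'l op \<Rightarrow> ('k \<times> 'l \<Rightarrow> complex) \<Rightarrow> ('k \<times> 'l \<Rightarrow> complex)" where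
  "tensor_right B psi = (\<lambda>(k, l). B (\<lambda>l'. psi (k, l')) l)"

definition quantum_strategy ::
  "nat \<Rightarrow> (nat \<Rightarrow> 'k op) \<Rightarrow> nat \<Rightarrow> (nat \<Rightarrow> 'l op) \<Rightarrow> ('k \<times> 'l \<Rightarrow> complex) \<Rightarrow> bool" where
  "quantum_strategy m A n B psi \<longleftrightarrow>
     psi \<in> l2 \<and> l2norm psi = 1
     \<and> (\<forall>i<m. self_adjoint_op (A i) \<and> is_identity_op (A i \<circ> A i))
     \<and> (\<forall>j<n. self_adjoint_op (B j) \<and> is_identity_op (B j \<circ> B j))"

definition non_degenerate ::
  "nat \<Rightarrow> (nat \<Rightarrow> 'k op) \<Rightarrow> nat \<Rightarrow> (nat \<Rightarrow> 'l op) \<Rightarrow> ('k \<times> 'l \<Rightarrow> complex) \<Rightarrow> bool" where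
  "non_degenerate m A n B psi \<longleftrightarrow>
     \<not> (\<exists>P. orth_proj P \<and> \<not> is_identity_op P \<and> (\<forall>i<m. commutes_op P (A i))
            \<and> tensor_left P psi = psi)
   \<and> \<not> (\<exists>Q. orth_proj Q \<and> \<not> is_identity_op Q \<and> (\<forall>j<n. commutes_op Q (B j))
            \<and> tensor_right Q psi = psi)"

text \<open>lambda : H1 -> H2 with psi = sum_k |k> (x) lambda|k>, i.e. (lambda|k>)(l) = psi(k,l);
  lambda x = sum_k x_k lambda|k> (a Hilbert-Schmidt operator), and its adjoint.\<close>
definition lam :: "('k \<times> 'l \<Rightarrow> complex) \<Rightarrow> ('k \<Rightarrow> complex) \<Rightarrow> ('l \<Rightarrow> complex)" where
  "lam psi x = (\<lambda>l. infsum (\<lambda>k. x k * psi (k, l)) UNIV)"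

definition lam_adj :: "('k \<times> 'l \<Rightarrow> complex) \<Rightarrow> ('l \<Rightarrow> complex) \<Rightarrow> ('k \<Rightarrow> complex)" where
  "lam_adj psi y = (\<lambda>k. infsum (\<lambda>l. cnj (psi (k, l)) * y l) UNIV)"

text \<open>Entrywise complex conjugate of an operator w.r.t. the (standard) basis.\<close>
definition conj_op :: "'a op \<Rightarrow> 'a op" where
  "conj_op T = (\<lambda>x k. cnj (T (\<lambda>k'. cnj (x k')) k))"

text \<open>Unital C*-algebra generated by A_0..A_(m-1): operator-norm closure of the
  (unital) algebra of noncommutative polynomials in the A_i (a *-algebra since the
  A_i are self-adjoint).\<close>
primrec word_op :: "(nat \<Rightarrow> 'a op) \<Rightarrow> nat list \<Rightarrow> 'a op" where
  "word_op A [] = id"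
| "word_op A (i # w) = A i \<circ> word_op A w"

definition poly_alg :: "nat \<Rightarrow> (nat \<Rightarrow> 'a op) \<Rightarrow> 'a op set" where
  "poly_alg m A = {S. \<exists>F c. finite F \<and> (\<forall>w\<in>F. set w \<subseteq> {..<m})
       \<and> (\<forall>x\<in>l2. S x = (\<lambda>k. \<Sum>w\<in>F. c w * word_op A w x k))}"

definition cstar_gen :: "nat \<Rightarrow> (nat \<Rightarrow> 'a op) \<Rightarrow> 'a op set" where
  "cstar_gen m A = {T. bounded_op T \<and>
      (\<forall>e>0. \<exists>S\<in>poly_alg m A. \<forall>x\<in>l2. l2norm (\<lambda>k. T x k - S x k) \<le> e * l2norm x)}"

definition cspan :: "('a \<Rightarrow> complex) set \<Rightarrow> ('a \<Rightarrow> complex) set" where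
  "cspan S = {x. \<exists>F c. finite F \<and> F \<subseteq> S \<and> x = (\<lambda>k. \<Sum>v\<in>F. c v * v k)}"

definition l2closure :: "('a \<Rightarrow> complex) set \<Rightarrow> ('a \<Rightarrow> complex) set" where
  "l2closure S = {y\<in>l2. \<forall>e>0. \<exists>s\<in>S. l2norm (\<lambda>k. y k - s k) < e}"

end

theory Submission
  imports Defs "HOL-Analysis.Analysis"
begin

(*
  The proof rests on a one-sided criterion.  Let B_1..B_n be self-adjoint on H2 and let
  C = cstar_gen n B.  For psi in l2(K x L) with associated map lambda (rows psi(k,.) = lambda|k>):
     there is an orthogonal projection Q <> I commuting with all B_j and with
     (I (x) Q) psi = psi   iff   the closed span V of C lambda H1 is not all of H2.
  (=>) Q fixes every row of psi, hence every vector lambda x (by self-adjointness of Q and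
       Fubini), hence C lambda H1 since Q commutes with C, hence the closed span V.  Q <> I
       forces V <> H2.
  (<=) V is a closed subspace invariant under the self-adjoint B_j, so the orthogonal
       projection onto V commutes with the B_j; V contains the rows lambda|k>, so the
       projection fixes psi, and it is not the identity since V <> H2.
  The condition on A is reduced to this criterion by passing to the swapped conjugate
  psi'(l,k) = cnj psi(k,l): then (P (x) I) psi = psi iff (I (x) conj P) psi' = psi',
  lambda_{psi'} = lambda_psi^*, and conjugation maps cstar_gen m A onto the C*-algebra
  generated by the conjugated A_i.
*)

lemma l2_zero[simp]: "(\<lambda>k. 0) \<in> l2"
  by (simp add: l2_def)

lemma cmod_mult_le: "cmod a * cmod b \<le> ((cmod a)\<^sup>2 + (cmod b)\<^sup>2) / 2"
proof -
  have "0 \<le> (cmod a - cmod b)\<^sup>2" by simp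
  thus ?thesis by (simp add: power2_eq_square algebra_simps)
qed

text \<open>Products of two l2 sequences are absolutely summable (arithmetic-geometric mean),
  also after applying norm-preserving maps such as cnj.\<close>
lemma l2_prod_abs_summable:
  assumes "x \<in> l2" "y \<in> l2"
    and that: "\<And>a. cmod (f a) = cmod a" "\<And>a. cmod (g a) = cmod a"
  shows "(\<lambda>k. cmod (f (x k) * g (y k))) summable_on UNIV"
proof -
  have "(\<lambda>k. (cmod (x k))\<^sup>2 + (cmod (y k))\<^sup>2) summable_on UNIV"
    using assms by (auto simp: l2_def intro!: summable_on_add)
  from summable_on_cmult_left[OF this, of "1/2"]
  have "(\<lambda>k. ((cmod (x k))\<^sup>2 + (cmod (y k))\<^sup>2) / 2) summable_on UNIV" by simp
  then show ?thesis
    by (rule Infinite_Sum.abs_summable_on_comparison_test') (use cmod_mult_le in \<open>simp add: norm_mult that\<close>)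
qed

lemma l2_inner_summable:
  assumes "x \<in> l2" "y \<in> l2"
  shows "(\<lambda>k. cnj (x k) * y k) summable_on UNIV"
proof -
  have "(\<lambda>k. cmod (cnj (x k) * id (y k))) summable_on UNIV"
    by (rule l2_prod_abs_summable[OF assms]) auto
  thus ?thesis by (simp add: abs_summable_summable)
qed

lemma l2_mult_summable:
  assumes "x \<in> l2" "y \<in> l2"
  shows "(\<lambda>k. x k * y k) summable_on UNIV"
proof -
  have "(\<lambda>k. cmod (id (x k) * id (y k))) summable_on UNIV"
    by (rule l2_prod_abs_summable[OF assms]) auto
  thus ?thesis by (simp add: abs_summable_summable)
qed

lemma l2_add[intro]:
  assumes "x \<in> l2" "y \<in> l2" shows "(\<lambda>k. x k + y k) \<in> l2"
  unfolding l2_def mem_Collect_eq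
proof (rule summable_on_comparison_test)
  show "(\<lambda>k. 2 * (cmod (x k))\<^sup>2 + 2 * (cmod (y k))\<^sup>2) summable_on UNIV"
    using assms by (auto simp: l2_def intro!: summable_on_add summable_on_cmult_right)
  fix k
  have "(cmod (x k + y k))\<^sup>2 \<le> (cmod (x k) + cmod (y k))\<^sup>2"
    by (simp add: norm_triangle_ineq power_mono)
  also have "\<dots> \<le> 2 * (cmod (x k))\<^sup>2 + 2 * (cmod (y k))\<^sup>2"
    using cmod_mult_le[of "x k" "y k"] by (simp add: power2_eq_square algebra_simps)
  finally show "(cmod (x k + y k))\<^sup>2 \<le> 2 * (cmod (x k))\<^sup>2 + 2 * (cmod (y k))\<^sup>2" .
qed simp

lemma l2_scale[intro]:
  assumes "x \<in> l2" shows "(\<lambda>k. c * x k) \<in> l2"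
  using assms summable_on_cmult_right[of "\<lambda>k. (cmod (x k))\<^sup>2" UNIV "(cmod c)\<^sup>2"]
  by (simp add: l2_def norm_mult power_mult_distrib)

lemma l2_cnj[intro]:
  assumes "x \<in> l2" shows "(\<lambda>k. cnj (x k)) \<in> l2"
  using assms by (simp add: l2_def)

lemma l2_uminus[intro]:
  assumes "x \<in> l2" shows "(\<lambda>k. - x k) \<in> l2"
  using assms by (simp add: l2_def)

lemma l2_diff[intro]:
  assumes "x \<in> l2" "y \<in> l2" shows "(\<lambda>k. x k - y k) \<in> l2"
  using l2_add[OF assms(1) l2_uminus[OF assms(2)]] by simp

lemma l2_sum[intro]:
  assumes "\<And>v. v \<in> F \<Longrightarrow> f v \<in> l2"
  shows "(\<lambda>k. \<Sum>v\<in>F. f v k) \<in> l2"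
  using assms
proof (induction F rule: infinite_finite_induct)
  case (insert a F) then show ?case
    using l2_add[of "f a" "\<lambda>k. \<Sum>v\<in>F. f v k"] by simp
qed auto

lemma l2norm_sq: "x \<in> l2 \<Longrightarrow> (l2norm x)\<^sup>2 = infsum (\<lambda>k. (cmod (x k))\<^sup>2) UNIV"
  unfolding l2norm_def by (simp add: infsum_nonneg)

lemma l2inner_self: "x \<in> l2 \<Longrightarrow> l2inner x x = of_real (infsum (\<lambda>k. (cmod (x k))\<^sup>2) UNIV)"
proof -
  assume x: "x \<in> l2"
  have e: "(\<lambda>k. cnj (x k) * x k) = (\<lambda>k. of_real ((cmod (x k))\<^sup>2))"
    by (rule ext, subst complex_norm_square, simp add: mult.commute)
  show ?thesis unfolding l2inner_def e
    by (rule infsumI, rule has_sum_of_real, rule has_sum_infsum) (use x in \<open>simp add: l2_def\<close>)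
qed

lemma l2inner_swap: "l2inner y x = cnj (l2inner x y)"
  unfolding l2inner_def by (simp flip: infsum_cnj add: mult.commute)

lemma l2inner_add_left:
  assumes "x \<in> l2" "y \<in> l2" "z \<in> l2"
  shows "l2inner (\<lambda>k. x k + y k) z = l2inner x z + l2inner y z"
  unfolding l2inner_def using l2_inner_summable[OF assms(1,3)] l2_inner_summable[OF assms(2,3)]
  by (simp add: distrib_right infsum_add)

lemma l2inner_add_right:
  assumes "x \<in> l2" "y \<in> l2" "z \<in> l2"
  shows "l2inner z (\<lambda>k. x k + y k) = l2inner z x + l2inner z y"
  unfolding l2inner_def using l2_inner_summable[OF assms(3,1)] l2_inner_summable[OF assms(3,2)]
  by (simp add: distrib_left infsum_add)

lemma l2inner_scale_right:
  assumes "x \<in> l2" "z \<in> l2"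
  shows "l2inner z (\<lambda>k. c * x k) = c * l2inner z x"
  unfolding l2inner_def using l2_inner_summable[OF assms(2,1)]
  by (subst infsum_cmult_right[symmetric]) (auto simp: algebra_simps)

lemma l2inner_scale_left:
  assumes "x \<in> l2" "z \<in> l2"
  shows "l2inner (\<lambda>k. c * x k) z = cnj c * l2inner x z"
  using l2inner_scale_right[OF assms, of "c"] l2inner_swap[of "(\<lambda>k. c * x k)" z]
    l2inner_swap[of x z] by simp

lemma l2inner_diff_right:
  assumes "x \<in> l2" "y \<in> l2" "z \<in> l2"
  shows "l2inner z (\<lambda>k. x k - y k) = l2inner z x - l2inner z y"
  using l2inner_add_right[OF assms(1) l2_uminus[OF assms(2)] assms(3)]
    l2inner_scale_right[OF assms(2) assms(3), of "-1"] by simp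

lemma l2inner_zero_left: "l2inner (\<lambda>k. 0) y = 0" by (simp add: l2inner_def)
lemma l2inner_zero_right: "l2inner y (\<lambda>k. 0) = 0" by (simp add: l2inner_def)

lemma l2inner_self_Re: "x \<in> l2 \<Longrightarrow> Re (l2inner x x) = (l2norm x)\<^sup>2"
  by (simp add: l2inner_self l2norm_sq)

lemma l2inner_self_eq: "x \<in> l2 \<Longrightarrow> l2inner x x = of_real ((l2norm x)\<^sup>2)"
  by (simp add: l2inner_self l2norm_sq)

lemma l2norm_nonneg: "0 \<le> l2norm x"
  unfolding l2norm_def by (simp add: infsum_nonneg)

lemma l2norm_cnj: "l2norm (\<lambda>k. cnj (a k)) = l2norm a"
  by (simp add: l2norm_def)

lemma l2norm_zero_iff: "x \<in> l2 \<Longrightarrow> l2norm x = 0 \<longleftrightarrow> x = (\<lambda>k. 0)"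
proof
  assume x: "x \<in> l2" and z: "l2norm x = 0"
  hence i: "infsum (\<lambda>k. (cmod (x k))\<^sup>2) UNIV = 0" using l2norm_sq[OF x] by simp
  show "x = (\<lambda>k. 0)"
  proof
    fix k
    have "(cmod (x k))\<^sup>2 = 0"
      by (rule nonneg_infsum_le_0D[where A=UNIV]) (use i x in \<open>auto simp: l2_def\<close>)
    thus "x k = 0" by simp
  qed
qed (simp add: l2norm_def)

text \<open>A vector whose norm is below every positive multiple of a fixed constant vanishes;
  this is how identities are obtained from approximations.\<close>
lemma l2_small_zero:
  assumes v: "v \<in> l2" and K: "0 \<le> K" and le: "\<And>e. 0 < e \<Longrightarrow> l2norm v \<le> K * e"
  shows "v = (\<lambda>k. 0)"
proof -
  have "l2norm v \<le> 0"
  proof (rule field_le_epsilon)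
    fix e :: real assume e: "0 < e"
    have "l2norm v \<le> K * (e / (K + 1))" using le[of "e / (K+1)"] e K by simp
    also have "\<dots> \<le> e" using K e by (simp add: field_simps)
    finally show "l2norm v \<le> 0 + e" by simp
  qed
  hence "l2norm v = 0" by (rule order_antisym[OF _ l2norm_nonneg])
  thus ?thesis using l2norm_zero_iff[OF v] by simp
qed

lemma diff_zero_eq: "(\<lambda>k. a k - b k) = (\<lambda>k. 0) \<Longrightarrow> a = (b :: 'a \<Rightarrow> complex)"
proof
  fix k assume h: "(\<lambda>k. a k - b k) = (\<lambda>k. 0)"
  show "a k = b k" using fun_cong[OF h, of k] by simp
qed

lemma finite_sum_le_l2norm:
  assumes "x \<in> l2" "finite F"
  shows "(\<Sum>k\<in>F. (cmod (x k))\<^sup>2) \<le> (l2norm x)\<^sup>2"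
proof -
  have "(\<Sum>k\<in>F. (cmod (x k))\<^sup>2) \<le> infsum (\<lambda>k. (cmod (x k))\<^sup>2) UNIV"
    by (rule finite_sum_le_infsum) (use assms in \<open>auto simp: l2_def\<close>)
  thus ?thesis using l2norm_sq[OF assms(1)] by simp
qed

lemma coord_le_l2norm:
  assumes "x \<in> l2" shows "cmod (x k) \<le> l2norm x"
proof -
  have "(cmod (x k))\<^sup>2 \<le> (l2norm x)\<^sup>2"
    using finite_sum_le_l2norm[OF assms, of "{k}"] by simp
  thus ?thesis using l2norm_nonneg[of x] by (simp add: power2_le_iff_abs_le)
qed

section \<open>l2 as a real Hilbert space\<close>

text \<open>To use the metric and inner-product library we package l2 as a type; the real inner
  product is the real part of the complex one.\<close>
typedef 'a hs = "l2 :: ('a \<Rightarrow> complex) set" morphisms vec mkhs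
  by (rule exI[of _ "\<lambda>k. 0"]) simp

setup_lifting type_definition_hs

instantiation hs :: (type) real_inner
begin
lift_definition zero_hs :: "'a hs" is "\<lambda>k. 0" by simp
lift_definition plus_hs :: "'a hs \<Rightarrow> 'a hs \<Rightarrow> 'a hs" is "\<lambda>x y k. x k + y k" by auto
lift_definition uminus_hs :: "'a hs \<Rightarrow> 'a hs" is "\<lambda>x k. - x k" by auto
lift_definition minus_hs :: "'a hs \<Rightarrow> 'a hs \<Rightarrow> 'a hs" is "\<lambda>x y k. x k - y k" by auto
lift_definition scaleR_hs :: "real \<Rightarrow> 'a hs \<Rightarrow> 'a hs" is "\<lambda>r x k. of_real r * x k" by auto
lift_definition norm_hs :: "'a hs \<Rightarrow> real" is "l2norm" .
lift_definition inner_hs :: "'a hs \<Rightarrow> 'a hs \<Rightarrow> real" is "\<lambda>x y. Re (l2inner x y)" .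
definition dist_hs :: "'a hs \<Rightarrow> 'a hs \<Rightarrow> real" where "dist_hs x y = norm (x - y)"
definition sgn_hs :: "'a hs \<Rightarrow> 'a hs" where "sgn_hs x = inverse (norm x) *\<^sub>R x"
definition uniformity_hs :: "('a hs \<times> 'a hs) filter" where
  "uniformity_hs = (INF e\<in>{0<..}. principal {(x, y). dist x y < e})"
definition open_hs :: "'a hs set \<Rightarrow> bool" where
  "open_hs U = (\<forall>x\<in>U. \<forall>\<^sub>F (x', y) in uniformity. x' = x \<longrightarrow> y \<in> U)"

instance
proof
  fix a b c :: "'a hs" and r s :: real and U :: "'a hs set"
  show "a + b + c = a + (b + c)" by transfer (simp add: add.assoc)
  show "a + b = b + a" by transfer (simp add: add.commute)
  show "0 + a = a" by transfer simp
  show "- a + a = 0" by transfer simp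
  show "a - b = a + - b" by transfer simp
  show "r *\<^sub>R (a + b) = r *\<^sub>R a + r *\<^sub>R b" by transfer (simp add: algebra_simps)
  show "(r + s) *\<^sub>R a = r *\<^sub>R a + s *\<^sub>R a" by transfer (simp add: algebra_simps)
  show "r *\<^sub>R s *\<^sub>R a = (r * s) *\<^sub>R a" by transfer (simp add: algebra_simps)
  show "1 *\<^sub>R a = a" by transfer simp
  show "sgn a = inverse (norm a) *\<^sub>R a" by (simp add: sgn_hs_def)
  show "dist a b = norm (a - b)" by (simp add: dist_hs_def)
  show "(uniformity :: ('a hs \<times> 'a hs) filter) = (INF e\<in>{0<..}. principal {(x, y). dist x y < e})"
    by (simp add: uniformity_hs_def)
  show "open U = (\<forall>x\<in>U. \<forall>\<^sub>F (x', y) in uniformity. x' = x \<longrightarrow> y \<in> U)"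
    by (simp add: open_hs_def)
  show "inner a b = inner b a"
    by transfer (metis cnj.sel(1) l2inner_swap)
  show "inner (a + b) c = inner a c + inner b c"
    by transfer (simp add: l2inner_add_left)
  show "inner (r *\<^sub>R a) b = r * inner a b"
    by transfer (simp add: l2inner_scale_left)
  show "0 \<le> inner a a"
    by transfer (simp add: l2inner_self_Re)
  show "(inner a a = 0) = (a = 0)"
    by transfer (simp add: l2inner_self_Re l2norm_zero_iff)
  show "norm a = sqrt (inner a a)"
    by transfer (simp add: l2inner_self_Re l2norm_nonneg)
qed
end

lemma vec_in_l2[simp]: "vec x \<in> l2" using vec by blast

lemma vec_mkhs[simp]: "x \<in> l2 \<Longrightarrow> vec (mkhs x) = x" by (simp add: mkhs_inverse)

lemma vec_eq_iff: "x = y \<longleftrightarrow> vec x = vec y" by (simp add: vec_inject)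

lemma vec_plus: "vec (x + y) = (\<lambda>k. vec x k + vec y k)" by transfer simp
lemma vec_minus: "vec (x - y) = (\<lambda>k. vec x k - vec y k)" by transfer simp
lemma vec_zero: "vec 0 = (\<lambda>k. 0)" by transfer simp
lemma vec_scaleR: "vec (r *\<^sub>R x) = (\<lambda>k. of_real r * vec x k)" by transfer simp
lemma norm_vec: "norm x = l2norm (vec x)" by transfer simp
lemma inner_vec: "inner x y = Re (l2inner (vec x) (vec y))" by transfer simp

lemma mkhs_plus: "x \<in> l2 \<Longrightarrow> y \<in> l2 \<Longrightarrow> mkhs x + mkhs y = mkhs (\<lambda>k. x k + y k)"
  by (simp add: vec_eq_iff vec_plus l2_add)
lemma mkhs_minus: "x \<in> l2 \<Longrightarrow> y \<in> l2 \<Longrightarrow> mkhs x - mkhs y = mkhs (\<lambda>k. x k - y k)"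
  by (simp add: vec_eq_iff vec_minus l2_diff)
lemma norm_mkhs: "x \<in> l2 \<Longrightarrow> norm (mkhs x) = l2norm x"
  by (simp add: norm_vec)

lemma l2norm_triangle:
  assumes "x \<in> l2" "y \<in> l2" shows "l2norm (\<lambda>k. x k + y k) \<le> l2norm x + l2norm y"
  using norm_triangle_ineq[of "mkhs x" "mkhs y"] assms by (simp add: mkhs_plus norm_mkhs l2_add)

lemma l2norm_scale: "x \<in> l2 \<Longrightarrow> l2norm (\<lambda>k. c * x k) = cmod c * l2norm x"
proof -
  assume x: "x \<in> l2"
  have "(l2norm (\<lambda>k. c * x k))\<^sup>2 = ((cmod c) * l2norm x)\<^sup>2"
    using l2norm_sq[OF x] l2norm_sq[OF l2_scale[OF x, of c]]
    by (simp add: norm_mult power_mult_distrib infsum_cmult_right')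
  thus ?thesis using l2norm_nonneg[of x] l2norm_nonneg[of "\<lambda>k. c * x k"]
    by (simp add: power2_eq_iff_nonneg)
qed

lemma l2norm_diff_sym: "x \<in> l2 \<Longrightarrow> y \<in> l2 \<Longrightarrow> l2norm (\<lambda>k. x k - y k) = l2norm (\<lambda>k. y k - x k)"
  using l2norm_scale[of "\<lambda>k. x k - y k" "-1"] by (simp add: l2_diff)

lemma l2norm_diff_triangle:
  assumes "x \<in> l2" "y \<in> l2" "z \<in> l2"
  shows "l2norm (\<lambda>k. x k - z k) \<le> l2norm (\<lambda>k. x k - y k) + l2norm (\<lambda>k. y k - z k)"
  using l2norm_triangle[OF l2_diff[OF assms(1,2)] l2_diff[OF assms(2,3)]] by simp

lemma l2_cauchy_schwarz:
  assumes a: "a \<in> l2" and b: "b \<in> l2"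
  shows "cmod (l2inner a b) \<le> l2norm a * l2norm b"
proof (cases "l2inner a b = 0")
  case True thus ?thesis by (simp add: l2norm_nonneg)
next
  case False
  define z where "z = l2inner a b"
  define c where "c = z / of_real (cmod z)"
  have cm: "cmod c = 1" using False by (simp add: c_def z_def norm_divide)
  have "l2inner (\<lambda>k. c * a k) b = cnj c * z" by (simp add: l2inner_scale_left[OF a b] z_def)
  also have "\<dots> = of_real (cmod z)" using False
    by (simp add: c_def z_def complex_norm_square[symmetric] power2_eq_square field_simps)
  finally have e: "Re (l2inner (\<lambda>k. c * a k) b) = cmod z" by simp
  have "Re (l2inner (\<lambda>k. c * a k) b) = inner (mkhs (\<lambda>k. c * a k)) (mkhs b)"
    using a b by (simp add: inner_vec l2_scale)
  also have "\<dots> \<le> norm (mkhs (\<lambda>k. c * a k)) * norm (mkhs b)"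
    using Cauchy_Schwarz_ineq2 by (rule abs_le_D1)
  also have "\<dots> = l2norm a * l2norm b" using a b cm by (simp add: norm_mkhs l2_scale l2norm_scale)
  finally show ?thesis using e by (simp add: z_def)
qed

text \<open>Completeness.  The coordinates of a Cauchy sequence converge; the coordinatewise limit
  is approximated in l2 because every finite partial sum of the squared error is controlled.\<close>
lemma hs_cauchy_limit_estimate:
  fixes X :: "nat \<Rightarrow> 'a hs"
  assumes L: "\<And>k. (\<lambda>n. vec (X n) k) \<longlonglongrightarrow> L k"
    and N: "\<forall>m\<ge>N. \<forall>n\<ge>N. norm (X m - X n) < e" and n: "N \<le> n" and e: "0 < e"
  shows "(\<lambda>k. vec (X n) k - L k) \<in> l2 \<and> l2norm (\<lambda>k. vec (X n) k - L k) \<le> e"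
proof -
  define d where "d = (\<lambda>k. vec (X n) k - L k)"
  have fs: "(\<Sum>k\<in>F. (cmod (d k))\<^sup>2) \<le> e\<^sup>2" if F: "finite F" for F
  proof (rule LIMSEQ_le_const2)
    show "(\<lambda>m. \<Sum>k\<in>F. (cmod (vec (X n) k - vec (X m) k))\<^sup>2) \<longlonglongrightarrow> (\<Sum>k\<in>F. (cmod (d k))\<^sup>2)"
      unfolding d_def by (intro tendsto_intros L)
    show "\<exists>N'. \<forall>m\<ge>N'. (\<Sum>k\<in>F. (cmod (vec (X n) k - vec (X m) k))\<^sup>2) \<le> e\<^sup>2"
    proof (intro exI allI impI)
      fix m assume m: "N \<le> m"
      have "(\<Sum>k\<in>F. (cmod (vec (X n) k - vec (X m) k))\<^sup>2) = (\<Sum>k\<in>F. (cmod (vec (X n - X m) k))\<^sup>2)"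
        by (simp add: vec_minus)
      also have "\<dots> \<le> (norm (X n - X m))\<^sup>2"
        unfolding norm_vec by (rule finite_sum_le_l2norm[OF vec_in_l2 F])
      also have "\<dots> \<le> e\<^sup>2" using N n m by (intro power_mono) (auto intro: less_imp_le)
      finally show "(\<Sum>k\<in>F. (cmod (vec (X n) k - vec (X m) k))\<^sup>2) \<le> e\<^sup>2" .
    qed
  qed
  have sm: "(\<lambda>k. (cmod (d k))\<^sup>2) summable_on UNIV"
    by (rule nonneg_bdd_above_summable_on) (auto intro!: bdd_aboveI2 fs)
  hence dl2: "d \<in> l2" by (simp add: l2_def)
  have "(l2norm d)\<^sup>2 \<le> e\<^sup>2"
    using infsum_le_finite_sums[OF sm fs] l2norm_sq[OF dl2] by simp
  hence "l2norm d \<le> e" using e l2norm_nonneg[of d] by (simp add: power2_le_iff_abs_le)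
  with dl2 show ?thesis by (simp add: d_def)
qed

instance hs :: (type) banach
proof
  fix X :: "nat \<Rightarrow> 'a hs" assume C: "Cauchy X"
  have "Cauchy (\<lambda>n. vec (X n) k)" for k
  proof (rule CauchyI)
    fix e :: real assume "0 < e"
    then obtain M where M: "\<forall>m\<ge>M. \<forall>n\<ge>M. norm (X m - X n) < e" using CauchyD[OF C] by blast
    have "norm (vec (X m) k - vec (X n) k) < e" if "M \<le> m" "M \<le> n" for m n
      using order_le_less_trans[OF coord_le_l2norm[OF vec_in_l2, of "X m - X n" k]] M that
      by (simp add: vec_minus norm_vec)
    thus "\<exists>M. \<forall>m\<ge>M. \<forall>n\<ge>M. norm (vec (X m) k - vec (X n) k) < e" by blast
  qed
  then obtain L where L: "\<And>k. (\<lambda>n. vec (X n) k) \<longlonglongrightarrow> L k"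
    unfolding Cauchy_convergent_iff convergent_def by metis
  have approx: "\<exists>N. \<forall>n\<ge>N. (\<lambda>k. vec (X n) k - L k) \<in> l2 \<and> l2norm (\<lambda>k. vec (X n) k - L k) \<le> e"
    if e: "0 < e" for e
    using CauchyD[OF C e] hs_cauchy_limit_estimate[OF L _ _ e] by blast
  obtain N where N: "(\<lambda>k. vec (X N) k - L k) \<in> l2" using approx[of 1] by auto
  have Ll2: "L \<in> l2" using l2_diff[OF vec_in_l2[of "X N"] N] by simp
  have "X \<longlonglongrightarrow> mkhs L"
  proof (rule LIMSEQ_I)
    fix r :: real assume r: "0 < r"
    obtain N where N: "\<forall>n\<ge>N. l2norm (\<lambda>k. vec (X n) k - L k) \<le> r/2" using approx[of "r/2"] r by auto
    have "norm (X n - mkhs L) < r" if "N \<le> n" for n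
      using N that r by (force simp: norm_vec vec_minus Ll2)
    thus "\<exists>no. \<forall>n\<ge>no. norm (X n - mkhs L) < r" by blast
  qed
  thus "convergent X" by (rule convergentI)
qed

section \<open>The projection theorem\<close>

text \<open>In a real inner-product space, two near-minimisers of the distance from x to a
  subspace are close to each other (parallelogram law applied to x - y and x - z).\<close>
lemma near_minimisers_close:
  fixes x :: "'a::real_inner"
  assumes S: "subspace S" and yz: "y \<in> S" "z \<in> S"
    and d: "0 \<le> d" "\<And>w. w \<in> S \<Longrightarrow> d \<le> dist x w"
    and p: "0 \<le> p" "p \<le> 1" and q: "0 \<le> q" "q \<le> 1"
    and ny: "dist x y \<le> d + p" and nz: "dist x z \<le> d + q"
  shows "(norm (y - z))\<^sup>2 \<le> (4 * d + 2) * (p + q)"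
proof -
  define a where "a = x - y"
  define b where "b = x - z"
  have mid: "d \<le> norm (x - (1/2) *\<^sub>R (y + z))"
    using d(2)[of "(1/2) *\<^sub>R (y + z)"] S yz by (simp add: subspace_add subspace_scale dist_norm)
  have "(1/2) *\<^sub>R (a + b) = x - (1/2) *\<^sub>R (y + z)"
  proof -
    have h: "(1/2) *\<^sub>R x + (1/2) *\<^sub>R x = x" by (metis scaleR_add_left field_sum_of_halves scaleR_one)
    show ?thesis by (simp add: a_def b_def algebra_simps h)
  qed
  moreover have "y - z = b - a" by (simp add: a_def b_def)
  moreover have "(norm (b - a))\<^sup>2 = 2 * (norm a)\<^sup>2 + 2 * (norm b)\<^sup>2 - 4 * (norm ((1/2) *\<^sub>R (a + b)))\<^sup>2"
    unfolding power2_norm_eq_inner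
    by (simp add: inner_add_left inner_add_right inner_diff_left inner_diff_right inner_commute algebra_simps)
  ultimately have "(norm (y - z))\<^sup>2 = 2 * (norm a)\<^sup>2 + 2 * (norm b)\<^sup>2 - 4 * (norm (x - (1/2) *\<^sub>R (y + z)))\<^sup>2"
    by simp
  also have "\<dots> \<le> 2 * (d + p)\<^sup>2 + 2 * (d + q)\<^sup>2 - 4 * d\<^sup>2"
    using power_mono[OF ny[unfolded dist_norm, folded a_def] norm_ge_zero, of 2]
      power_mono[OF nz[unfolded dist_norm, folded b_def] norm_ge_zero, of 2]
      power_mono[OF mid d(1), of 2] by linarith
  also have "\<dots> \<le> (4 * d + 2) * (p + q)"
  proof -
    have "p\<^sup>2 \<le> p" "q\<^sup>2 \<le> q" using p q by (auto simp: power2_eq_square mult_le_cancel_left1 intro: mult_left_le_one_le)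
    thus ?thesis by (simp add: power2_eq_square algebra_simps)
  qed
  finally show ?thesis .
qed

lemma minimising_sequence_Cauchy:
  fixes x :: "'a::real_inner"
  assumes S: "subspace S" and Y: "\<And>n. Y n \<in> S"
    and d: "0 \<le> d" "\<And>w. w \<in> S \<Longrightarrow> d \<le> dist x w"
    and near: "\<And>n. dist x (Y n) \<le> d + inverse (real (Suc n))"
  shows "Cauchy Y"
proof (rule CauchyI)
  define r :: "nat \<Rightarrow> real" where "r n = inverse (real (Suc n))" for n
  have r: "0 \<le> r n" "r n \<le> 1" for n by (auto simp: r_def field_simps)
  fix e :: real assume e: "0 < e"
  obtain N where N: "r N < e\<^sup>2 / (2 * (4 * d + 2))"
    using reals_Archimedean[of "e\<^sup>2 / (2 * (4 * d + 2))"] e d by (auto simp: r_def)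
  have "norm (Y m - Y n) < e" if mn: "N \<le> m" "N \<le> n" for m n
  proof -
    have rmn: "r m \<le> r N" "r n \<le> r N" using mn by (auto simp: r_def field_simps)
    have "(norm (Y m - Y n))\<^sup>2 \<le> (4 * d + 2) * (r m + r n)"
      using near_minimisers_close[OF S Y Y d r r] near by (simp add: r_def)
    also have "\<dots> \<le> (4 * d + 2) * (2 * r N)"
      using rmn d by (intro mult_left_mono) linarith+
    also have "\<dots> < (4 * d + 2) * (2 * (e\<^sup>2 / (2 * (4 * d + 2))))"
      using N d by (intro mult_strict_left_mono) auto
    also have "\<dots> = e\<^sup>2" using d by (simp add: field_simps)
    finally show ?thesis using e by (simp add: power_less_imp_less_base)
  qed
  thus "\<exists>M. \<forall>m\<ge>M. \<forall>n\<ge>M. norm (Y m - Y n) < e" by blast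
qed

text \<open>Existence of a closest point in a closed subspace of a complete inner-product space:
  the limit of a minimising sequence.\<close>
lemma closest_exists:
  fixes x :: "'a::{real_inner,complete_space}"
  assumes S: "closed S" "subspace S"
  shows "\<exists>y\<in>S. \<forall>z\<in>S. dist x y \<le> dist x z"
proof -
  have ne: "S \<noteq> {}" using S(2) subspace_0 by blast
  define d where "d = infdist x S"
  have d: "0 \<le> d" "\<And>w. w \<in> S \<Longrightarrow> d \<le> dist x w" by (simp_all add: d_def infdist_nonneg infdist_le)
  have "\<exists>y\<in>S. dist x y < d + inverse (real (Suc n))" for n
  proof -
    have "(INF a\<in>S. dist x a) < d + inverse (real (Suc n))"
      using infdist_notempty[OF ne, of x] by (simp add: d_def)
    thus ?thesis by (subst (asm) cINF_less_iff[OF ne]) auto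
  qed
  then obtain Y where Y: "\<And>n. Y n \<in> S" "\<And>n. dist x (Y n) < d + inverse (real (Suc n))"
    by metis
  have near: "dist x (Y n) \<le> d + inverse (real (Suc n))" for n using Y(2)[of n] by linarith
  have "Cauchy Y" by (rule minimising_sequence_Cauchy[OF S(2) Y(1) d near])
  then obtain y where y: "Y \<longlonglongrightarrow> y" using Cauchy_convergent_iff convergent_def by blast
  have yS: "y \<in> S" using closed_sequentially[OF S(1)] Y(1) y by blast
  have "dist x y \<le> d"
  proof (rule LIMSEQ_le[OF _ _ exI[of _ 0]])
    show "(\<lambda>n. dist x (Y n)) \<longlonglongrightarrow> dist x y" by (intro tendsto_intros y)
    show "(\<lambda>n. d + inverse (real (Suc n))) \<longlonglongrightarrow> d"
      using tendsto_add[OF tendsto_const LIMSEQ_inverse_real_of_nat, of d] by simp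
    show "\<forall>n\<ge>0. dist x (Y n) \<le> d + inverse (real (Suc n))" using near by blast
  qed
  with yS d(2) show ?thesis by (auto intro: order_trans)
qed

lemma closest_orth:
  fixes x :: "'a::real_inner"
  assumes S: "subspace S" and y: "y \<in> S" and cl: "\<forall>z\<in>S. dist x y \<le> dist x z"
  shows "\<forall>z\<in>S. inner (x - y) z = 0"
proof
  fix z assume z: "z \<in> S"
  show "inner (x - y) z = 0"
  proof (cases "z = 0")
    case False
    define t where "t = inner (x - y) z / inner z z"
    have zz: "0 < inner z z" using False by simp
    have "y + t *\<^sub>R z \<in> S" using S y z by (simp add: subspace_add subspace_scale)
    hence "(norm (x - y))\<^sup>2 \<le> (norm (x - (y + t *\<^sub>R z)))\<^sup>2"
      using cl by (auto simp: dist_norm intro: power_mono)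
    also have "(norm (x - (y + t *\<^sub>R z)))\<^sup>2 = (norm (x - y))\<^sup>2 - 2 * t * inner (x - y) z + t\<^sup>2 * inner z z"
      unfolding power2_norm_eq_inner
      by (simp add: inner_add_left inner_add_right inner_diff_left inner_diff_right inner_commute
          algebra_simps power2_eq_square)
    finally have "0 \<le> t\<^sup>2 * inner z z - 2 * t * inner (x - y) z" by simp
    also have "t\<^sup>2 * inner z z - 2 * t * inner (x - y) z = - (inner (x - y) z)\<^sup>2 / inner z z"
      using zz by (simp add: t_def power2_eq_square field_simps)
    finally have "(inner (x - y) z)\<^sup>2 \<le> 0" using zz by (simp add: divide_le_0_iff)
    thus ?thesis by simp
  qed simp
qed

definition proj :: "'a::real_inner set \<Rightarrow> 'a \<Rightarrow> 'a" where
  "proj S x = (SOME y. y \<in> S \<and> (\<forall>z\<in>S. inner (x - y) z = 0))"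

lemma proj_spec:
  fixes x :: "'a::{real_inner,complete_space}"
  assumes "closed S" "subspace S"
  shows "proj S x \<in> S \<and> (\<forall>z\<in>S. inner (x - proj S x) z = 0)"
proof -
  obtain y where "y \<in> S" "\<forall>z\<in>S. dist x y \<le> dist x z" using closest_exists[OF assms] by blast
  with closest_orth[OF assms(2)] have "\<exists>y. y \<in> S \<and> (\<forall>z\<in>S. inner (x - y) z = 0)" by blast
  thus ?thesis unfolding proj_def by (rule someI_ex)
qed

lemma proj_unique:
  fixes x :: "'a::{real_inner,complete_space}"
  assumes "closed S" "subspace S" "y \<in> S" "\<forall>z\<in>S. inner (x - y) z = 0"
  shows "proj S x = y"
proof -
  have p: "proj S x \<in> S" "\<forall>z\<in>S. inner (x - proj S x) z = 0" using proj_spec[OF assms(1,2)] by auto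
  have d: "proj S x - y \<in> S" using p(1) assms(2,3) by (simp add: subspace_diff)
  have "inner (proj S x - y) (proj S x - y) = inner (x - y) (proj S x - y) - inner (x - proj S x) (proj S x - y)"
    by (simp add: inner_diff_left)
  also have "\<dots> = 0" using d assms(4) p(2) by simp
  finally show ?thesis by simp
qed

definition l2_subspace :: "('a \<Rightarrow> complex) set \<Rightarrow> bool" where
  "l2_subspace M \<longleftrightarrow> M \<subseteq> l2 \<and> (\<lambda>k. 0) \<in> M \<and> (\<forall>x\<in>M. \<forall>y\<in>M. (\<lambda>k. x k + y k) \<in> M)
     \<and> (\<forall>x\<in>M. \<forall>c. (\<lambda>k. c * x k) \<in> M)"

definition l2_closed :: "('a \<Rightarrow> complex) set \<Rightarrow> bool" where
  "l2_closed M \<longleftrightarrow> (\<forall>y\<in>l2. (\<forall>e>0. \<exists>s\<in>M. l2norm (\<lambda>k. y k - s k) < e) \<longrightarrow> y \<in> M)"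

lemma l2_subspaceD: assumes "l2_subspace W"
  shows "W \<subseteq> l2" "(\<lambda>k. 0) \<in> W" "\<And>x y. x \<in> W \<Longrightarrow> y \<in> W \<Longrightarrow> (\<lambda>k. x k + y k) \<in> W"
    "\<And>x c. x \<in> W \<Longrightarrow> (\<lambda>k. c * x k) \<in> W"
  using assms by (auto simp: l2_subspace_def)

lemma hs_closed:
  assumes "l2_closed M" "M \<subseteq> l2" shows "closed {h. vec h \<in> M}"
proof -
  have "closure {h. vec h \<in> M} \<subseteq> {h. vec h \<in> M}"
  proof
    fix h assume "h \<in> closure {h. vec h \<in> M}"
    hence a: "\<forall>e>0. \<exists>g\<in>{h. vec h \<in> M}. dist g h < e" by (simp add: closure_approachable)
    have "\<forall>e>0. \<exists>s\<in>M. l2norm (\<lambda>k. vec h k - s k) < e"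
    proof (intro allI impI)
      fix e :: real assume "0 < e"
      then obtain g where g: "vec g \<in> M" "dist g h < e" using a by auto
      have "dist g h = l2norm (\<lambda>k. vec h k - vec g k)"
        unfolding dist_norm norm_vec vec_minus by (rule l2norm_diff_sym) simp_all
      thus "\<exists>s\<in>M. l2norm (\<lambda>k. vec h k - s k) < e" using g by auto
    qed
    with assms(1) show "h \<in> {h. vec h \<in> M}" by (simp add: l2_closed_def)
  qed
  thus ?thesis by (simp add: closure_subset_eq)
qed

lemma hs_subspace:
  assumes "l2_subspace M" shows "subspace {h. vec h \<in> M}"
  using assms unfolding l2_subspace_def subspace_def
  by (auto simp: vec_zero vec_plus vec_scaleR)

text \<open>The orthogonal projection onto a closed subspace M of l2, obtained from the projection
  theorem; orthogonality holds for the complex inner product since M is complex linear.\<close>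
definition fproj :: "('a \<Rightarrow> complex) set \<Rightarrow> ('a \<Rightarrow> complex) \<Rightarrow> ('a \<Rightarrow> complex)" where
  "fproj M x = vec (proj {h. vec h \<in> M} (mkhs x))"

lemma fproj_basic:
  assumes M: "l2_subspace M" "l2_closed M" and x: "x \<in> l2"
  shows "fproj M x \<in> M" "\<And>z. z \<in> M \<Longrightarrow> l2inner (\<lambda>k. x k - fproj M x k) z = 0"
proof -
  note sp = proj_spec[OF hs_closed[OF M(2) l2_subspaceD(1)[OF M(1)]] hs_subspace[OF M(1)], of "mkhs x"]
  show "fproj M x \<in> M" using sp by (simp add: fproj_def)
  fix z assume z: "z \<in> M"
  hence zl: "z \<in> l2" using l2_subspaceD(1)[OF M(1)] by auto
  define w where "w = (\<lambda>k. x k - fproj M x k)"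
  have wl: "w \<in> l2" by (simp add: w_def fproj_def l2_diff x)
  have hw: "mkhs x - proj {h. vec h \<in> M} (mkhs x) = mkhs w"
    using l2_diff[OF x vec_in_l2[of "proj {h. vec h \<in> M} (mkhs x)"]]
    by (simp add: vec_eq_iff vec_minus w_def fproj_def x)
  have or: "\<And>z. z \<in> M \<Longrightarrow> Re (l2inner w z) = 0"
  proof -
    fix z assume z: "z \<in> M"
    hence zl: "z \<in> l2" using l2_subspaceD(1)[OF M(1)] by auto
    have "inner (mkhs x - proj {h. vec h \<in> M} (mkhs x)) (mkhs z) = 0" using sp z zl by simp
    thus "Re (l2inner w z) = 0" using hw wl zl by (simp add: inner_vec)
  qed
  have "Re (l2inner w z) = 0" using or z .
  moreover have "Re (l2inner w (\<lambda>k. \<i> * z k)) = 0"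
  proof -
    have "(\<lambda>k. \<i> * z k) \<in> M" using M(1) z by (simp add: l2_subspace_def)
    thus ?thesis by (rule or)
  qed
  ultimately show "l2inner (\<lambda>k. x k - fproj M x k) z = 0"
    using l2inner_scale_right[OF zl wl, of \<i>] unfolding w_def[symmetric]
    by (simp add: complex_eq_iff)
qed

lemma fproj_unique:
  assumes M: "l2_subspace M" "l2_closed M" and x: "x \<in> l2" and y: "y \<in> M"
    and o: "\<And>z. z \<in> M \<Longrightarrow> l2inner (\<lambda>k. x k - y k) z = 0"
  shows "fproj M x = y"
proof -
  have yl: "y \<in> l2" using y l2_subspaceD(1)[OF M(1)] by auto
  have "proj {h. vec h \<in> M} (mkhs x) = mkhs y"
  proof (rule proj_unique[OF hs_closed[OF M(2) l2_subspaceD(1)[OF M(1)]] hs_subspace[OF M(1)]])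
    show "mkhs y \<in> {h. vec h \<in> M}" using y yl by simp
    show "\<forall>z\<in>{h. vec h \<in> M}. inner (mkhs x - mkhs y) z = 0"
      using o x yl by (auto simp: inner_vec mkhs_minus l2_diff)
  qed
  thus ?thesis using yl by (simp add: fproj_def)
qed

context
  fixes M :: "('a \<Rightarrow> complex) set"
  assumes M: "l2_subspace M" "l2_closed M"
begin

lemma fproj_in: "x \<in> l2 \<Longrightarrow> fproj M x \<in> M" by (rule fproj_basic(1)[OF M])
lemma fproj_l2: "x \<in> l2 \<Longrightarrow> fproj M x \<in> l2" using fproj_in l2_subspaceD(1)[OF M(1)] by blast
lemma fproj_orth: "x \<in> l2 \<Longrightarrow> z \<in> M \<Longrightarrow> l2inner (\<lambda>k. x k - fproj M x k) z = 0"
  by (rule fproj_basic(2)[OF M])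
lemma fproj_orth': "x \<in> l2 \<Longrightarrow> z \<in> M \<Longrightarrow> l2inner z (\<lambda>k. x k - fproj M x k) = 0"
proof -
  assume a: "x \<in> l2" "z \<in> M"
  have "l2inner z (\<lambda>k. x k - fproj M x k) = cnj (l2inner (\<lambda>k. x k - fproj M x k) z)"
    by (rule l2inner_swap)
  thus ?thesis using fproj_orth[OF a] by simp
qed

lemma fproj_fix: "y \<in> M \<Longrightarrow> fproj M y = y"
proof -
  assume y: "y \<in> M"
  hence yl: "y \<in> l2" using l2_subspaceD(1)[OF M(1)] by auto
  show ?thesis by (rule fproj_unique[OF M yl y]) (simp add: l2inner_def)
qed

lemma fproj_idem: "x \<in> l2 \<Longrightarrow> fproj M (fproj M x) = fproj M x"
  by (simp add: fproj_fix fproj_in)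

lemma fproj_add:
  assumes x: "x \<in> l2" and y: "y \<in> l2"
  shows "fproj M (\<lambda>k. x k + y k) = (\<lambda>k. fproj M x k + fproj M y k)"
proof (rule fproj_unique[OF M l2_add[OF x y]])
  show "(\<lambda>k. fproj M x k + fproj M y k) \<in> M" using M(1) fproj_in x y by (simp add: l2_subspace_def)
  fix z assume z: "z \<in> M"
  hence zl: "z \<in> l2" using l2_subspaceD(1)[OF M(1)] by auto
  have e: "(\<lambda>k. x k + y k - (fproj M x k + fproj M y k)) = (\<lambda>k. (x k - fproj M x k) + (y k - fproj M y k))"
    by (simp add: algebra_simps)
  show "l2inner (\<lambda>k. x k + y k - (fproj M x k + fproj M y k)) z = 0"
    unfolding e using l2inner_add_left[OF l2_diff[OF x fproj_l2[OF x]] l2_diff[OF y fproj_l2[OF y]] zl]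
      fproj_orth[OF x z] fproj_orth[OF y z] by simp
qed

lemma fproj_scale:
  assumes x: "x \<in> l2"
  shows "fproj M (\<lambda>k. c * x k) = (\<lambda>k. c * fproj M x k)"
proof (rule fproj_unique[OF M l2_scale[OF x]])
  show "(\<lambda>k. c * fproj M x k) \<in> M" using M(1) fproj_in x by (simp add: l2_subspace_def)
  fix z assume z: "z \<in> M"
  hence zl: "z \<in> l2" using l2_subspaceD(1)[OF M(1)] by auto
  have e: "(\<lambda>k. c * x k - c * fproj M x k) = (\<lambda>k. c * (x k - fproj M x k))"
    by (simp add: algebra_simps)
  show "l2inner (\<lambda>k. c * x k - c * fproj M x k) z = 0"
    unfolding e using l2inner_scale_left[OF l2_diff[OF x fproj_l2[OF x]] zl] fproj_orth[OF x z] by simp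
qed

lemma decomp_inner:
  assumes x: "x \<in> l2" and y: "y \<in> l2"
  shows "l2inner x y = l2inner (fproj M x) (fproj M y) + l2inner (\<lambda>k. x k - fproj M x k) (\<lambda>k. y k - fproj M y k)"
proof -
  define a where "a = fproj M x"
  define b where "b = fproj M y"
  define u where "u = (\<lambda>k. x k - a k)"
  define v where "v = (\<lambda>k. y k - b k)"
  have al: "a \<in> l2" "b \<in> l2" using fproj_l2 x y by (auto simp: a_def b_def)
  have ul: "u \<in> l2" "v \<in> l2" using l2_diff x y al by (auto simp: u_def v_def)
  have xe: "x = (\<lambda>k. a k + u k)" "y = (\<lambda>k. b k + v k)" by (auto simp: u_def v_def)
  have o1: "l2inner u b = 0" unfolding u_def a_def using fproj_orth[OF x fproj_in[OF y]] by (simp add: b_def)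
  have o2: "l2inner a v = 0" unfolding v_def b_def using fproj_orth'[OF y fproj_in[OF x]] by (simp add: a_def)
  have "l2inner x y = l2inner (\<lambda>k. a k + u k) (\<lambda>k. b k + v k)" using xe by simp
  also have "\<dots> = l2inner a b + l2inner a v + (l2inner u b + l2inner u v)"
    using al ul by (simp add: l2inner_add_left l2inner_add_right l2_add)
  also have "\<dots> = l2inner a b + l2inner u v" using o1 o2 by simp
  finally show ?thesis by (simp add: a_def b_def u_def v_def)
qed

lemma fproj_norm_le: "x \<in> l2 \<Longrightarrow> l2norm (fproj M x) \<le> l2norm x"
proof -
  assume x: "x \<in> l2"
  have "Re (l2inner x x) = Re (l2inner (fproj M x) (fproj M x)) + Re (l2inner (\<lambda>k. x k - fproj M x k) (\<lambda>k. x k - fproj M x k))"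
    using decomp_inner[OF x x] by simp
  hence "(l2norm x)\<^sup>2 = (l2norm (fproj M x))\<^sup>2 + (l2norm (\<lambda>k. x k - fproj M x k))\<^sup>2"
    using x fproj_l2[OF x] l2_diff[OF x fproj_l2[OF x]] by (simp add: l2inner_self_Re)
  hence "(l2norm (fproj M x))\<^sup>2 \<le> (l2norm x)\<^sup>2" by simp
  thus ?thesis using l2norm_nonneg[of x] by (simp add: power2_le_iff_abs_le)
qed

lemma fproj_selfadj:
  assumes x: "x \<in> l2" and y: "y \<in> l2"
  shows "l2inner (fproj M x) y = l2inner x (fproj M y)"
proof -
  have "l2inner (fproj M x) y = l2inner (fproj M (fproj M x)) (fproj M y) + l2inner (\<lambda>k. fproj M x k - fproj M (fproj M x) k) (\<lambda>k. y k - fproj M y k)"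
    using decomp_inner[OF fproj_l2[OF x] y] .
  also have "\<dots> = l2inner (fproj M x) (fproj M y)" by (simp only: fproj_idem x diff_self l2inner_zero_left add_0_right)
  also have "\<dots> = l2inner (fproj M x) (fproj M (fproj M y)) + l2inner (\<lambda>k. x k - fproj M x k) (\<lambda>k. fproj M y k - fproj M (fproj M y) k)"
    by (simp only: fproj_idem y diff_self l2inner_zero_right add_0_right)
  also have "\<dots> = l2inner x (fproj M y)"
    using decomp_inner[OF x fproj_l2[OF y]] by simp
  finally show ?thesis .
qed

lemma fproj_orth_proj: "orth_proj (fproj M)"
  unfolding orth_proj_def self_adjoint_op_def bounded_op_def
proof (intro conjI ballI allI exI[of _ 1])
  show "\<And>x. x \<in> l2 \<Longrightarrow> fproj M x \<in> l2" by (rule fproj_l2)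
  show "\<And>x y. x \<in> l2 \<Longrightarrow> y \<in> l2 \<Longrightarrow> fproj M (\<lambda>k. x k + y k) = (\<lambda>k. fproj M x k + fproj M y k)"
    by (rule fproj_add)
  show "\<And>x c. x \<in> l2 \<Longrightarrow> fproj M (\<lambda>k. c * x k) = (\<lambda>k. c * fproj M x k)" by (rule fproj_scale)
  show "\<And>x. x \<in> l2 \<Longrightarrow> l2norm (fproj M x) \<le> 1 * l2norm x" using fproj_norm_le by simp
  show "\<And>x y. x \<in> l2 \<Longrightarrow> y \<in> l2 \<Longrightarrow> l2inner (fproj M x) y = l2inner x (fproj M y)"
    by (rule fproj_selfadj)
  show "\<And>x. x \<in> l2 \<Longrightarrow> fproj M (fproj M x) = fproj M x" by (rule fproj_idem)
qed

lemma fproj_not_id: "M \<noteq> l2 \<Longrightarrow> \<not> is_identity_op (fproj M)"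
proof
  assume ne: "M \<noteq> l2" and i: "is_identity_op (fproj M)"
  obtain y where y: "y \<in> l2" "y \<notin> M" using ne l2_subspaceD(1)[OF M(1)] by auto
  have "fproj M y = y" using i y(1) by (simp add: is_identity_op_def)
  thus False using fproj_in[OF y(1)] y(2) by simp
qed

end

lemma bop_l2: "bounded_op T \<Longrightarrow> x \<in> l2 \<Longrightarrow> T x \<in> l2"
  by (simp add: bounded_op_def)
lemma bop_add: "bounded_op T \<Longrightarrow> x \<in> l2 \<Longrightarrow> y \<in> l2 \<Longrightarrow> T (\<lambda>k. x k + y k) = (\<lambda>k. T x k + T y k)"
  by (simp add: bounded_op_def)
lemma bop_scale: "bounded_op T \<Longrightarrow> x \<in> l2 \<Longrightarrow> T (\<lambda>k. c * x k) = (\<lambda>k. c * T x k)"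
  by (simp add: bounded_op_def)
lemma bop_zero: "bounded_op T \<Longrightarrow> T (\<lambda>k. 0) = (\<lambda>k. 0)"
  using bop_scale[of T "\<lambda>k. 0" 0] by simp
lemma bop_diff: "bounded_op T \<Longrightarrow> x \<in> l2 \<Longrightarrow> y \<in> l2 \<Longrightarrow> T (\<lambda>k. x k - y k) = (\<lambda>k. T x k - T y k)"
  using bop_add[of T x "\<lambda>k. - y k"] bop_scale[of T y "-1"] by (simp add: l2_uminus)
lemma bop_bound: "bounded_op T \<Longrightarrow> \<exists>C>0. \<forall>x\<in>l2. l2norm (T x) \<le> C * l2norm x"
proof -
  assume "bounded_op T"
  then obtain C where C: "\<forall>x\<in>l2. l2norm (T x) \<le> C * l2norm x" by (auto simp: bounded_op_def)
  have "\<forall>x\<in>l2. l2norm (T x) \<le> max C 1 * l2norm (x :: 'a \<Rightarrow> complex)"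
  proof
    fix x :: "'a \<Rightarrow> complex" assume "x \<in> l2"
    hence "l2norm (T x) \<le> C * l2norm x" using C by blast
    also have "\<dots> \<le> max C 1 * l2norm x" by (rule mult_right_mono) (auto simp: l2norm_nonneg)
    finally show "l2norm (T x) \<le> max C 1 * l2norm x" .
  qed
  thus ?thesis by (intro exI[of _ "max C 1"]) auto
qed

lemma bop_sum:
  assumes T: "bounded_op T" and f: "\<And>v. v \<in> F \<Longrightarrow> f v \<in> l2"
  shows "T (\<lambda>k. \<Sum>v\<in>F. c v * f v k) = (\<lambda>k. \<Sum>v\<in>F. c v * T (f v) k)"
  using f
proof (induction F rule: infinite_finite_induct)
  case (infinite F) then show ?case using bop_zero[OF T] by simp
next
  case empty then show ?case using bop_zero[OF T] by simp
next
  case (insert a F)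
  have s: "(\<lambda>k. \<Sum>v\<in>F. c v * f v k) \<in> l2" using insert by (auto intro!: l2_sum l2_scale)
  have "T (\<lambda>k. \<Sum>v\<in>insert a F. c v * f v k) = T (\<lambda>k. c a * f a k + (\<Sum>v\<in>F. c v * f v k))"
    using insert by simp
  also have "\<dots> = (\<lambda>k. c a * T (f a) k + T (\<lambda>k. \<Sum>v\<in>F. c v * f v k) k)"
    using bop_add[OF T l2_scale[OF insert.prems[of a]] s] bop_scale[OF T insert.prems[of a]] by simp
  also have "\<dots> = (\<lambda>k. \<Sum>v\<in>insert a F. c v * T (f v) k)" using insert by simp
  finally show ?case .
qed

lemma bop_comp: "bounded_op S \<Longrightarrow> bounded_op T \<Longrightarrow> bounded_op (S \<circ> T)"
proof -
  assume S: "bounded_op S" and T: "bounded_op T"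
  obtain C where C: "C > 0" "\<forall>x\<in>l2. l2norm (S x) \<le> C * l2norm x" using bop_bound[OF S] by blast
  obtain D where D: "D > 0" "\<forall>x\<in>l2. l2norm (T x) \<le> D * l2norm x" using bop_bound[OF T] by blast
  have "\<forall>x\<in>l2. l2norm (S (T x)) \<le> (C * D) * l2norm (x :: 'a \<Rightarrow> complex)"
  proof
    fix x :: "'a \<Rightarrow> complex" assume x: "x \<in> l2"
    have "l2norm (S (T x)) \<le> C * l2norm (T x)" using C bop_l2[OF T x] by blast
    also have "\<dots> \<le> C * (D * l2norm x)" using D x C(1) by (simp add: mult_left_mono)
    finally show "l2norm (S (T x)) \<le> (C * D) * l2norm x" by (simp add: mult.assoc)
  qed
  thus ?thesis using S T unfolding bounded_op_def by (auto simp: bop_l2[OF T])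
qed

lemma sa_bop: "self_adjoint_op T \<Longrightarrow> bounded_op T" by (simp add: self_adjoint_op_def)

lemma l2closure_in_l2: "l2closure T \<subseteq> l2" by (auto simp: l2closure_def)

lemma l2closure_superset: "T \<subseteq> l2 \<Longrightarrow> T \<subseteq> l2closure T"
proof
  fix x assume "T \<subseteq> l2" "x \<in> T"
  moreover have "l2norm (\<lambda>k. x k - x k) = 0" by (simp add: l2norm_def)
  ultimately show "x \<in> l2closure T" unfolding l2closure_def
    by (intro CollectI conjI allI impI) (auto intro!: bexI[of _ x])
qed

lemma l2closure_closed: "T \<subseteq> l2 \<Longrightarrow> l2_closed (l2closure T)"
  unfolding l2_closed_def
proof (intro ballI impI)
  fix y :: "'a \<Rightarrow> complex" assume T: "T \<subseteq> l2" and y: "y \<in> l2" and a: "\<forall>e>0. \<exists>s\<in>l2closure T. l2norm (\<lambda>k. y k - s k) < e"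
  show "y \<in> l2closure T" unfolding l2closure_def
  proof (intro CollectI conjI allI impI y)
    fix e :: real assume e: "0 < e"
    have e2: "0 < e/2" using e by simp
    obtain s where s: "s \<in> l2closure T" "l2norm (\<lambda>k. y k - s k) < e/2" using a e2 by blast
    have "\<exists>t\<in>T. l2norm (\<lambda>k. s k - t k) < e/2" using s(1) e2 unfolding l2closure_def by blast
    then obtain t where t: "t \<in> T" "l2norm (\<lambda>k. s k - t k) < e/2" by blast
    have sl: "s \<in> l2" using s(1) by (simp add: l2closure_def)
    have tl: "t \<in> l2" using t(1) T by blast
    have "l2norm (\<lambda>k. y k - t k) \<le> l2norm (\<lambda>k. y k - s k) + l2norm (\<lambda>k. s k - t k)"
      by (rule l2norm_diff_triangle[OF y sl tl])
    also have "\<dots> < e" using s t by simp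
    finally show "\<exists>s\<in>T. l2norm (\<lambda>k. y k - s k) < e" using t by blast
  qed
qed

lemma l2closure_add:
  assumes T: "l2_subspace T" and x: "x \<in> l2closure T" and y: "y \<in> l2closure T"
  shows "(\<lambda>k. x k + y k) \<in> l2closure T"
  unfolding l2closure_def
proof (intro CollectI conjI allI impI)
  have xl: "x \<in> l2" and yl: "y \<in> l2" using x y by (auto simp: l2closure_def)
  show "(\<lambda>k. x k + y k) \<in> l2" using xl yl by (rule l2_add)
  fix e :: real assume "0 < e"
  hence e2: "0 < e/2" by simp
  obtain s where s: "s \<in> T" "l2norm (\<lambda>k. x k - s k) < e/2" using x e2 unfolding l2closure_def by blast
  obtain t where t: "t \<in> T" "l2norm (\<lambda>k. y k - t k) < e/2" using y e2 unfolding l2closure_def by blast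
  have sl: "s \<in> l2" "t \<in> l2" using s t l2_subspaceD(1)[OF T] by auto
  have "(\<lambda>k. x k + y k - (s k + t k)) = (\<lambda>k. (x k - s k) + (y k - t k))" by (simp add: algebra_simps)
  hence "l2norm (\<lambda>k. x k + y k - (s k + t k)) \<le> l2norm (\<lambda>k. x k - s k) + l2norm (\<lambda>k. y k - t k)"
    using l2norm_triangle[OF l2_diff[OF xl sl(1)] l2_diff[OF yl sl(2)]] by simp
  also have "\<dots> < e" using s t by simp
  finally have "l2norm (\<lambda>k. x k + y k - (s k + t k)) < e" .
  thus "\<exists>u\<in>T. l2norm (\<lambda>k. x k + y k - u k) < e"
    using l2_subspaceD(3)[OF T s(1) t(1)] by (intro bexI[of _ "\<lambda>k. s k + t k"])
qed

lemma l2closure_scale: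
  assumes T: "l2_subspace T" and x: "x \<in> l2closure T"
  shows "(\<lambda>k. c * x k) \<in> l2closure T"
proof (cases "c = 0")
  case True
  thus ?thesis using l2closure_superset[OF l2_subspaceD(1)[OF T]] l2_subspaceD(2)[OF T] by auto
next
  case False
  have xl: "x \<in> l2" using x by (auto simp: l2closure_def)
  show ?thesis unfolding l2closure_def
  proof (intro CollectI conjI allI impI l2_scale xl)
    fix e :: real assume "0 < e"
    hence e2: "0 < e / cmod c" using False by simp
    obtain s where s: "s \<in> T" "l2norm (\<lambda>k. x k - s k) < e / cmod c" using x e2 unfolding l2closure_def by blast
    have sl: "s \<in> l2" using s l2_subspaceD(1)[OF T] by auto
    have "(\<lambda>k. c * x k - c * s k) = (\<lambda>k. c * (x k - s k))" by (simp add: algebra_simps)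
    hence "l2norm (\<lambda>k. c * x k - c * s k) = cmod c * l2norm (\<lambda>k. x k - s k)"
      using l2norm_scale[OF l2_diff[OF xl sl]] by simp
    also have "\<dots> < e" using s(2) False by (simp add: field_simps)
    finally have "l2norm (\<lambda>k. c * x k - c * s k) < e" .
    thus "\<exists>u\<in>T. l2norm (\<lambda>k. c * x k - u k) < e"
      using l2_subspaceD(4)[OF T s(1)] by (intro bexI[of _ "\<lambda>k. c * s k"])
  qed
qed

lemma l2closure_subspace:
  assumes T: "l2_subspace T" shows "l2_subspace (l2closure T)"
proof -
  have "(\<lambda>k. 0) \<in> l2closure T"
    using l2closure_superset[OF l2_subspaceD(1)[OF T]] l2_subspaceD(2)[OF T] by (rule subsetD)
  thus ?thesis unfolding l2_subspace_def
    using l2closure_in_l2 l2closure_add[OF T] l2closure_scale[OF T] by blast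
qed

lemma cspan_subspace:
  assumes S: "S \<subseteq> l2" shows "l2_subspace (cspan S)"
  unfolding l2_subspace_def
proof (intro conjI ballI allI subsetI)
  fix x assume "x \<in> cspan S"
  then obtain F c where "finite F" "F \<subseteq> S" "x = (\<lambda>k. \<Sum>v\<in>F. c v * v k)" by (auto simp: cspan_def)
  thus "x \<in> l2" using S by (auto intro!: l2_sum l2_scale)
next
  show "(\<lambda>k. 0) \<in> cspan S" unfolding cspan_def by (intro CollectI exI[of _ "{}"]) auto
next
  fix x y assume "x \<in> cspan S" "y \<in> cspan S"
  then obtain F c G d where F: "finite F" "F \<subseteq> S" "x = (\<lambda>k. \<Sum>v\<in>F. c v * v k)"
    and G: "finite G" "G \<subseteq> S" "y = (\<lambda>k. \<Sum>v\<in>G. d v * v k)" by (auto simp: cspan_def)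
  define e where "e v = (if v \<in> F then c v else 0) + (if v \<in> G then d v else 0)" for v
  have "(\<lambda>k. x k + y k) = (\<lambda>k. \<Sum>v\<in>F \<union> G. e v * v k)"
  proof
    fix k
    have "(\<Sum>v\<in>F \<union> G. e v * v k) = (\<Sum>v\<in>F \<union> G. (if v \<in> F then c v * v k else 0)) + (\<Sum>v\<in>F \<union> G. (if v \<in> G then d v * v k else 0))"
    proof -
      have "\<And>v. e v * v k = (if v \<in> F then c v * v k else 0) + (if v \<in> G then d v * v k else 0)"
        by (simp add: e_def distrib_right)
      thus ?thesis by (simp add: sum.distrib)
    qed
    also have "\<dots> = x k + y k"
      using F G
      by (simp add: sum.inter_restrict[symmetric] Int_absorb1 Int_absorb2 Int_commute)
    finally show "x k + y k = (\<Sum>v\<in>F \<union> G. e v * v k)" by simp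
  qed
  thus "(\<lambda>k. x k + y k) \<in> cspan S" using F G unfolding cspan_def
    by (intro CollectI exI[of _ "F \<union> G"] exI[of _ e] conjI) auto
next
  fix x and a :: complex assume "x \<in> cspan S"
  then obtain F c where F: "finite F" "F \<subseteq> S" "x = (\<lambda>k. \<Sum>v\<in>F. c v * v k)" by (auto simp: cspan_def)
  have "(\<lambda>k. a * x k) = (\<lambda>k. \<Sum>v\<in>F. (a * c v) * v k)" using F by (simp add: sum_distrib_left mult.assoc)
  thus "(\<lambda>k. a * x k) \<in> cspan S" using F unfolding cspan_def
    by (intro CollectI exI[of _ F] exI[of _ "\<lambda>v. a * c v"] conjI) auto
qed

lemma cspan_superset: "S \<subseteq> cspan S"
proof
  fix x assume "x \<in> S"
  moreover have "x = (\<lambda>k. \<Sum>v\<in>{x}. 1 * v k)" by simp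
  ultimately show "x \<in> cspan S" unfolding cspan_def
    by (intro CollectI exI[of _ "{x}"] exI[of _ "\<lambda>v. 1"] conjI) auto
qed

lemma sum_in_subspace:
  assumes W: "l2_subspace W" and F: "finite F" and f: "\<And>v. v \<in> F \<Longrightarrow> f v \<in> W"
  shows "(\<lambda>k. \<Sum>v\<in>F. c v * f v k) \<in> W"
  using F f
proof (induction F rule: finite_induct)
  case empty then show ?case using l2_subspaceD(2)[OF W] by simp
next
  case (insert a F)
  have "(\<lambda>k. c a * f a k + (\<Sum>v\<in>F. c v * f v k)) \<in> W"
    using insert l2_subspaceD(3,4)[OF W] by simp
  thus ?case using insert by simp
qed

text \<open>If a bounded operator maps a set S into a closed subspace W, it maps the closed span
  of S into W (linearity on the span, continuity on its closure).\<close>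
lemma l2closure_span_image:
  assumes T: "bounded_op T" and W: "l2_subspace W" "l2_closed W" and S: "S \<subseteq> l2"
    and TS: "\<And>s. s \<in> S \<Longrightarrow> T s \<in> W" and y: "y \<in> l2closure (cspan S)"
  shows "T y \<in> W"
proof -
  have span: "T x \<in> W" if "x \<in> cspan S" for x
  proof -
    have "\<exists>F c. finite F \<and> F \<subseteq> S \<and> x = (\<lambda>k. \<Sum>v\<in>F. c v * v k)" using that by (simp add: cspan_def)
    then obtain F c where F: "finite F" "F \<subseteq> S" "x = (\<lambda>k. \<Sum>v\<in>F. c v * v k)" by blast
    have "T x = (\<lambda>k. \<Sum>v\<in>F. c v * T v k)" using F S bop_sum[OF T, of F id c] by auto
    also have "\<dots> \<in> W" using sum_in_subspace[OF W(1) F(1), of T c] TS F(2) by auto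
    finally show ?thesis .
  qed
  obtain C where C: "C > 0" "\<forall>x\<in>l2. l2norm (T x) \<le> C * l2norm x" using bop_bound[OF T] by blast
  have yl: "y \<in> l2" using y by (simp add: l2closure_def)
  have spl: "cspan S \<subseteq> l2" using l2_subspaceD(1)[OF cspan_subspace[OF S]] .
  have "\<forall>e>0. \<exists>s\<in>W. l2norm (\<lambda>k. T y k - s k) < e"
  proof (intro allI impI)
    fix e :: real assume "0 < e"
    hence eC: "0 < e / C" using C by simp
    obtain s where s: "s \<in> cspan S" "l2norm (\<lambda>k. y k - s k) < e / C" using y eC unfolding l2closure_def by blast
    have sl: "s \<in> l2" using s spl by auto
    have "l2norm (\<lambda>k. T y k - T s k) = l2norm (T (\<lambda>k. y k - s k))" by (simp add: bop_diff[OF T yl sl])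
    also have "\<dots> \<le> C * l2norm (\<lambda>k. y k - s k)" using C l2_diff[OF yl sl] by blast
    also have "\<dots> < e" using s C by (simp add: field_simps)
    finally show "\<exists>s\<in>W. l2norm (\<lambda>k. T y k - s k) < e" using span[OF s(1)] by blast
  qed
  thus ?thesis using W(2) bop_l2[OF T yl] by (simp add: l2_closed_def)
qed

text \<open>Taking the identity operator: the closed span of S is the least closed subspace containing S.\<close>
lemma bop_id: "bounded_op (\<lambda>x. x)"
  unfolding bounded_op_def by (auto intro!: exI[of _ 1])

lemma l2closure_span_least:
  assumes W: "l2_subspace W" "l2_closed W" and S: "S \<subseteq> W"
  shows "l2closure (cspan S) \<subseteq> W"
proof
  fix y assume y: "y \<in> l2closure (cspan S)"
  have Sl: "S \<subseteq> l2" using S l2_subspaceD(1)[OF W(1)] by (rule order_trans)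
  show "y \<in> W" using l2closure_span_image[OF bop_id W Sl _ y] S by (simp add: subsetD)
qed

lemma fixed_vectors_subspace:
  assumes Q: "bounded_op Q" shows "l2_subspace {y\<in>l2. Q y = y}" "l2_closed {y\<in>l2. Q y = y}"
proof -
  show "l2_subspace {y\<in>l2. Q y = y}" unfolding l2_subspace_def
    by (auto simp: bop_add[OF Q] bop_scale[OF Q] bop_zero[OF Q] l2_add l2_scale)
  obtain C where C: "C > 0" "\<forall>x\<in>l2. l2norm (Q x) \<le> C * l2norm x" using bop_bound[OF Q] by blast
  show "l2_closed {y\<in>l2. Q y = y}" unfolding l2_closed_def
  proof (intro ballI impI)
    fix y :: "'a \<Rightarrow> complex"
    assume y: "y \<in> l2" and a: "\<forall>e>0. \<exists>s\<in>{y \<in> l2. Q y = y}. l2norm (\<lambda>k. y k - s k) < e"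
    have Qyl: "Q y \<in> l2" using bop_l2[OF Q y] .
    have "(\<lambda>k. Q y k - y k) = (\<lambda>k. 0)"
    proof (rule l2_small_zero[OF l2_diff[OF Qyl y]])
      show "0 \<le> C + 1" using C by simp
      fix e :: real assume e: "0 < e"
      obtain s where s: "s \<in> l2" "Q s = s" "l2norm (\<lambda>k. y k - s k) < e" using a e by auto
      have "l2norm (\<lambda>k. Q y k - y k) \<le> l2norm (\<lambda>k. Q y k - s k) + l2norm (\<lambda>k. s k - y k)"
        by (rule l2norm_diff_triangle[OF Qyl s(1) y])
      also have "l2norm (\<lambda>k. Q y k - s k) = l2norm (Q (\<lambda>k. y k - s k))"
        using bop_diff[OF Q y s(1)] s(2) by simp
      also have "\<dots> \<le> C * l2norm (\<lambda>k. y k - s k)" using C l2_diff[OF y s(1)] by blast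
      also have "l2norm (\<lambda>k. s k - y k) = l2norm (\<lambda>k. y k - s k)" by (rule l2norm_diff_sym[OF s(1) y])
      finally have "l2norm (\<lambda>k. Q y k - y k) \<le> (C + 1) * l2norm (\<lambda>k. y k - s k)" by (simp add: algebra_simps)
      also have "\<dots> \<le> (C + 1) * e" using s(3) C by (intro mult_left_mono) auto
      finally show "l2norm (\<lambda>k. Q y k - y k) \<le> (C + 1) * e" .
    qed
    thus "y \<in> {y \<in> l2. Q y = y}" using y diff_zero_eq by blast
  qed
qed

section \<open>The generated C*-algebra\<close>

lemma word_l2:
  assumes B: "\<And>j. j < n \<Longrightarrow> bounded_op (B j)" and w: "set w \<subseteq> {..<n}" and x: "x \<in> l2"
  shows "word_op B w x \<in> l2"
  using w by (induction w) (auto simp: x bop_l2[OF B])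

lemma poly_repr:
  assumes "S \<in> poly_alg n B"
  obtains F c where "finite F" "\<forall>w\<in>F. set w \<subseteq> {..<n}"
    "\<forall>x\<in>l2. S x = (\<lambda>k. \<Sum>w\<in>F. c w * word_op B w x k)"
  using assms unfolding poly_alg_def by blast

lemma poly_l2:
  assumes B: "\<And>j. j < n \<Longrightarrow> bounded_op (B j)" and S: "S \<in> poly_alg n B" and x: "x \<in> l2"
  shows "S x \<in> l2"
proof -
  obtain F c where F: "finite F" "\<forall>w\<in>F. set w \<subseteq> {..<n}"
    "\<forall>x\<in>l2. S x = (\<lambda>k. \<Sum>w\<in>F. c w * word_op B w x k)" using poly_repr[OF S] by blast
  show ?thesis using F x by (auto intro!: l2_sum l2_scale word_l2[OF B])
qed

text \<open>The C*-algebra contains the identity and is closed under left multiplication by the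
  generators (approximants of B_j b are B_j applied to approximants of b).\<close>
lemma cstar_id: "(\<lambda>x. x) \<in> cstar_gen n (B :: nat \<Rightarrow> 'a op)"
proof -
  have p: "(\<lambda>x. x) \<in> poly_alg n B" unfolding poly_alg_def
    by (intro CollectI exI[of _ "{[]}"] exI[of _ "\<lambda>w. 1"] conjI) auto
  show ?thesis unfolding cstar_gen_def
  proof (intro CollectI conjI bop_id allI impI)
    fix e :: real assume e0: "0 < e"
    have "\<forall>x\<in>l2. l2norm (\<lambda>k. x k - x k) \<le> e * l2norm (x :: 'a \<Rightarrow> complex)"
    proof (intro ballI)
      fix x :: "'a \<Rightarrow> complex" assume "x \<in> l2"
      from e0 have "0 \<le> e * l2norm x" using l2norm_nonneg[of x] by simp
      thus "l2norm (\<lambda>k. x k - x k) \<le> e * l2norm x" by (simp add: l2norm_def[of "\<lambda>k. 0"])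
    qed
    thus "\<exists>S\<in>poly_alg n B. \<forall>x\<in>l2. l2norm (\<lambda>k. x k - S x k) \<le> e * l2norm x"
      using p by (intro bexI[of _ "\<lambda>x. x"])
  qed
qed

lemma cstar_comp:
  assumes B: "\<And>j. j < n \<Longrightarrow> bounded_op (B j)" and j: "j < n" and b: "b \<in> cstar_gen n B"
  shows "B j \<circ> b \<in> cstar_gen n B"
proof -
  have bb: "bounded_op b" using b by (simp add: cstar_gen_def)
  obtain C where C: "C > 0" "\<forall>x\<in>l2. l2norm (B j x) \<le> C * l2norm x" using bop_bound[OF B[OF j]] by blast
  show ?thesis unfolding cstar_gen_def
  proof (intro CollectI conjI bop_comp[OF B[OF j] bb] allI impI)
    fix e :: real assume e: "0 < e"
    hence eC: "0 < e / C" using C by simp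
    obtain S where S: "S \<in> poly_alg n B" "\<forall>x\<in>l2. l2norm (\<lambda>k. b x k - S x k) \<le> (e / C) * l2norm x"
      using b eC unfolding cstar_gen_def by blast
    obtain F c where F: "finite F" "\<forall>w\<in>F. set w \<subseteq> {..<n}"
      "\<forall>x\<in>l2. S x = (\<lambda>k. \<Sum>w\<in>F. c w * word_op B w x k)" using poly_repr[OF S(1)] by blast
    define S' where "S' = (\<lambda>x k. \<Sum>w'\<in>(Cons j) ` F. c (tl w') * word_op B w' x k)"
    have S'p: "S' \<in> poly_alg n B" unfolding poly_alg_def S'_def
      by (intro CollectI exI[of _ "(Cons j) ` F"] exI[of _ "\<lambda>w'. c (tl w')"] conjI) (use F j in auto)
    have S'e: "S' x = B j (S x)" if x: "x \<in> l2" for x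
    proof -
      have "B j (S x) = (\<lambda>k. \<Sum>w\<in>F. c w * B j (word_op B w x) k)"
        using F(3) x bop_sum[OF B[OF j], of F "\<lambda>w. word_op B w x" c] F(2) word_l2[OF B _ x] by auto
      also have "\<dots> = S' x" unfolding S'_def
        by (subst sum.reindex) (auto simp: inj_on_def)
      finally show ?thesis by simp
    qed
    show "\<exists>S\<in>poly_alg n B. \<forall>x\<in>l2. l2norm (\<lambda>k. (B j \<circ> b) x k - S x k) \<le> e * l2norm x"
    proof (intro bexI[OF _ S'p] ballI)
      fix x :: "'a \<Rightarrow> complex" assume x: "x \<in> l2"
      have bx: "b x \<in> l2" and sx: "S x \<in> l2" using bop_l2[OF bb x] poly_l2[OF B S(1) x] by auto
      have "l2norm (\<lambda>k. (B j \<circ> b) x k - S' x k) = l2norm (B j (\<lambda>k. b x k - S x k))"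
        using S'e[OF x] bop_diff[OF B[OF j] bx sx] by simp
      also have "\<dots> \<le> C * l2norm (\<lambda>k. b x k - S x k)" using C l2_diff[OF bx sx] by blast
      also have "\<dots> \<le> C * ((e / C) * l2norm x)" using S(2) x C by (intro mult_left_mono) auto
      also have "\<dots> = e * l2norm x" using C by simp
      finally show "l2norm (\<lambda>k. (B j \<circ> b) x k - S' x k) \<le> e * l2norm x" .
    qed
  qed
qed


lemma poly_alg_commute:
  assumes B: "\<And>j. j < n \<Longrightarrow> bounded_op (B j)" and Q: "bounded_op Q"
    and QB: "\<And>j. j < n \<Longrightarrow> commutes_op Q (B j)"
    and S: "S \<in> poly_alg n B" and y: "y \<in> l2"
  shows "Q (S y) = S (Q y)"
proof -
  have word: "Q (word_op B w y) = word_op B w (Q y)" if w: "set w \<subseteq> {..<n}" for w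
    using w
  proof (induction w)
    case (Cons j w)
    have "word_op B w y \<in> l2" using Cons.prems word_l2[OF B _ y] by simp
    hence "Q (B j (word_op B w y)) = B j (Q (word_op B w y))"
      using QB[of j] Cons.prems by (simp add: commutes_op_def)
    thus ?case using Cons by simp
  qed simp
  obtain F c where F: "finite F" "\<forall>w\<in>F. set w \<subseteq> {..<n}"
    "\<forall>x\<in>l2. S x = (\<lambda>k. \<Sum>w\<in>F. c w * word_op B w x k)" using poly_repr[OF S] by blast
  have "Q (S y) = (\<lambda>k. \<Sum>w\<in>F. c w * Q (word_op B w y) k)"
    using F(3) y bop_sum[OF Q, of F "\<lambda>w. word_op B w y" c] F(2) word_l2[OF B _ y] by auto
  also have "\<dots> = (\<lambda>k. \<Sum>w\<in>F. c w * word_op B w (Q y) k)" using word F(2) by simp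
  also have "\<dots> = S (Q y)" using F(3) bop_l2[OF Q y] by simp
  finally show ?thesis .
qed

lemma cstar_comm:
  assumes B: "\<And>j. j < n \<Longrightarrow> bounded_op (B j)" and Q: "bounded_op Q"
    and QB: "\<And>j. j < n \<Longrightarrow> commutes_op Q (B j)" and b: "b \<in> cstar_gen n B"
  shows "commutes_op Q b"
  unfolding commutes_op_def
proof
  fix x :: "'a \<Rightarrow> complex" assume x: "x \<in> l2"
  have bb: "bounded_op b" using b by (simp add: cstar_gen_def)
  obtain C where C: "C > 0" "\<forall>x\<in>l2. l2norm (Q x) \<le> C * l2norm x" using bop_bound[OF Q] by blast
  have Qx: "Q x \<in> l2" using bop_l2[OF Q x] .
  have "(\<lambda>k. Q (b x) k - b (Q x) k) = (\<lambda>k. 0)"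
  proof (rule l2_small_zero)
    show "(\<lambda>k. Q (b x) k - b (Q x) k) \<in> l2" using bop_l2[OF Q bop_l2[OF bb x]] bop_l2[OF bb Qx] by (rule l2_diff)
    show "0 \<le> 2 * C * l2norm x" using C l2norm_nonneg[of x] by simp
    fix e :: real assume e: "0 < e"
    obtain S where S: "S \<in> poly_alg n B" "\<forall>x\<in>l2. l2norm (\<lambda>k. b x k - S x k) \<le> e * l2norm x"
      using b e unfolding cstar_gen_def by blast
    have bx: "b x \<in> l2" "S x \<in> l2" "b (Q x) \<in> l2" "S (Q x) \<in> l2"
      using bop_l2[OF bb x] poly_l2[OF B S(1) x] bop_l2[OF bb Qx] poly_l2[OF B S(1) Qx] by auto
    have "l2norm (\<lambda>k. Q (b x) k - b (Q x) k) \<le> l2norm (\<lambda>k. Q (b x) k - S (Q x) k) + l2norm (\<lambda>k. S (Q x) k - b (Q x) k)"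
      by (rule l2norm_diff_triangle) (use bop_l2[OF Q bx(1)] bx in auto)
    also have "l2norm (\<lambda>k. Q (b x) k - S (Q x) k) = l2norm (Q (\<lambda>k. b x k - S x k))"
      using poly_alg_commute[OF B Q QB S(1) x] bop_diff[OF Q bx(1) bx(2)] by simp
    also have "\<dots> \<le> C * l2norm (\<lambda>k. b x k - S x k)" using C l2_diff[OF bx(1) bx(2)] by blast
    also have "\<dots> \<le> C * (e * l2norm x)" using S(2) x C by (intro mult_left_mono) auto
    also have "l2norm (\<lambda>k. S (Q x) k - b (Q x) k) = l2norm (\<lambda>k. b (Q x) k - S (Q x) k)"
      by (rule l2norm_diff_sym) (use bx in auto)
    also have "\<dots> \<le> e * l2norm (Q x)" using S(2) Qx by blast
    also have "\<dots> \<le> e * (C * l2norm x)" using C x e by (intro mult_left_mono) auto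
    finally show "l2norm (\<lambda>k. Q (b x) k - b (Q x) k) \<le> 2 * C * l2norm x * e" by (simp add: algebra_simps)
  qed
  thus "Q (b x) = b (Q x)" by (rule diff_zero_eq)
qed

section \<open>Entrywise conjugation of operators\<close>

text \<open>Conjugation x -> cnj x is antiunitary, so conj_op preserves boundedness,
  self-adjointness, being a projection, being the identity, and commutation; it is an
  involution.\<close>
lemma l2inner_cnj_cnj: "l2inner (\<lambda>k. cnj (a k)) (\<lambda>k. cnj (b k)) = l2inner b a"
  unfolding l2inner_def by (simp add: mult.commute)

lemma conj_op_apply: "conj_op T x = (\<lambda>k. cnj (T (\<lambda>k'. cnj (x k')) k))"
  by (simp add: conj_op_def)

lemma conj_conj[simp]: "conj_op (conj_op T) = T"
  by (simp add: conj_op_def)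

lemma conj_bop: assumes T: "bounded_op T" shows "bounded_op (conj_op T)"
proof -
  obtain C where C: "C > 0" "\<forall>x\<in>l2. l2norm (T x) \<le> C * l2norm x" using bop_bound[OF T] by blast
  show ?thesis unfolding bounded_op_def conj_op_apply
  proof (intro conjI ballI allI exI[of _ C])
    fix x y :: "'a \<Rightarrow> complex" and c :: complex assume x: "x \<in> l2" and y: "y \<in> l2"
    show "(\<lambda>k. cnj (T (\<lambda>k'. cnj (x k')) k)) \<in> l2" using bop_l2[OF T l2_cnj[OF x]] by (rule l2_cnj)
    have "(\<lambda>k'. cnj (x k' + y k')) = (\<lambda>k'. cnj (x k') + cnj (y k'))" by simp
    thus "(\<lambda>k. cnj (T (\<lambda>k'. cnj (x k' + y k')) k)) = (\<lambda>k. cnj (T (\<lambda>k'. cnj (x k')) k) + cnj (T (\<lambda>k'. cnj (y k')) k))"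
      using bop_add[OF T l2_cnj[OF x] l2_cnj[OF y]] by simp
    have "(\<lambda>k'. cnj (c * x k')) = (\<lambda>k'. cnj c * cnj (x k'))" by simp
    thus "(\<lambda>k. cnj (T (\<lambda>k'. cnj (c * x k')) k)) = (\<lambda>k. c * cnj (T (\<lambda>k'. cnj (x k')) k))"
      using bop_scale[OF T l2_cnj[OF x], of "cnj c"] by simp
    show "l2norm (\<lambda>k. cnj (T (\<lambda>k'. cnj (x k')) k)) \<le> C * l2norm x"
    proof -
      have "l2norm (T (\<lambda>k'. cnj (x k'))) \<le> C * l2norm (\<lambda>k'. cnj (x k'))" using C l2_cnj[OF x] by blast
      thus ?thesis by (simp add: l2norm_cnj)
    qed
  qed
qed

lemma conj_sa: assumes T: "self_adjoint_op T" shows "self_adjoint_op (conj_op T)"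
  unfolding self_adjoint_op_def
proof (intro conjI conj_bop ballI)
  show "bounded_op T" using T by (simp add: self_adjoint_op_def)
  fix x y :: "'a \<Rightarrow> complex" assume x: "x \<in> l2" and y: "y \<in> l2"
  have sa: "l2inner (T a) b = l2inner a (T b)" if "a \<in> l2" "b \<in> l2" for a b
    using T that by (simp add: self_adjoint_op_def)
  have "l2inner (conj_op T x) y = l2inner (\<lambda>k. cnj (T (\<lambda>k'. cnj (x k')) k)) (\<lambda>k. cnj (cnj (y k)))"
    by (simp add: conj_op_apply)
  also have "\<dots> = l2inner (\<lambda>k. cnj (y k)) (T (\<lambda>k'. cnj (x k')))" by (rule l2inner_cnj_cnj)
  also have "\<dots> = l2inner (T (\<lambda>k. cnj (y k))) (\<lambda>k'. cnj (x k'))" using sa[OF l2_cnj[OF y] l2_cnj[OF x]] by simp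
  also have "\<dots> = l2inner (\<lambda>k. cnj (cnj (x k))) (\<lambda>k. cnj (T (\<lambda>k'. cnj (y k')) k))"
    by (rule l2inner_cnj_cnj[symmetric])
  also have "\<dots> = l2inner x (conj_op T y)" by (simp add: conj_op_apply)
  finally show "l2inner (conj_op T x) y = l2inner x (conj_op T y)" .
qed

lemma conj_orth: assumes P: "orth_proj P" shows "orth_proj (conj_op P)"
  unfolding orth_proj_def
proof (intro conjI conj_sa ballI)
  show "self_adjoint_op P" using P by (simp add: orth_proj_def)
  fix x :: "'a \<Rightarrow> complex" assume x: "x \<in> l2"
  have "P (P (\<lambda>k. cnj (x k))) = P (\<lambda>k. cnj (x k))" using P l2_cnj[OF x] by (simp add: orth_proj_def)
  thus "conj_op P (conj_op P x) = conj_op P x" by (simp add: conj_op_apply)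
qed

lemma conj_id: assumes "is_identity_op P" shows "is_identity_op (conj_op P)"
  unfolding is_identity_op_def
proof
  fix x :: "'a \<Rightarrow> complex" assume x: "x \<in> l2"
  have "P (\<lambda>k'. cnj (x k')) = (\<lambda>k'. cnj (x k'))" using assms l2_cnj[OF x] by (simp add: is_identity_op_def)
  thus "conj_op P x = x" by (simp add: conj_op_apply)
qed

lemma conj_id_iff: "is_identity_op (conj_op P) \<longleftrightarrow> is_identity_op P"
  using conj_id[of P] conj_id[of "conj_op P"] by auto

lemma conj_comm: assumes "commutes_op P T" shows "commutes_op (conj_op P) (conj_op T)"
  unfolding commutes_op_def
proof
  fix x :: "'a \<Rightarrow> complex" assume x: "x \<in> l2"
  have "P (T (\<lambda>k'. cnj (x k'))) = T (P (\<lambda>k'. cnj (x k')))" using assms l2_cnj[OF x] by (simp add: commutes_op_def)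
  thus "conj_op P (conj_op T x) = conj_op T (conj_op P x)" by (simp add: conj_op_apply)
qed

lemma conj_comm_iff: "commutes_op (conj_op P) (conj_op T) \<longleftrightarrow> commutes_op P T"
  using conj_comm[of P T] conj_comm[of "conj_op P" "conj_op T"] by auto


text \<open>Conjugation is multiplicative, hence maps words in the A_i to words in the conj_op A_i.\<close>
lemma conj_word: "conj_op (word_op A w) = word_op (\<lambda>i. conj_op (A i)) w"
proof (induction w)
  case Nil show ?case by (simp add: conj_op_def fun_eq_iff)
next
  case (Cons i w)
  have "conj_op (word_op A (i # w)) = conj_op (A i) \<circ> conj_op (word_op A w)"
    by (simp add: conj_op_def fun_eq_iff)
  also have "\<dots> = word_op (\<lambda>i. conj_op (A i)) (i # w)" using Cons.IH by simp
  finally show ?case .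
qed

lemma conj_poly_alg:
  assumes S: "S \<in> poly_alg m A"
  shows "conj_op S \<in> poly_alg m (\<lambda>i. conj_op (A i))"
proof -
  obtain F c where F: "finite F" "\<forall>w\<in>F. set w \<subseteq> {..<m}"
    "\<forall>x\<in>l2. S x = (\<lambda>k. \<Sum>w\<in>F. c w * word_op A w x k)" using S unfolding poly_alg_def by blast
  have repr: "\<forall>x\<in>l2. conj_op S x = (\<lambda>k. \<Sum>w\<in>F. cnj (c w) * word_op (\<lambda>i. conj_op (A i)) w x k)"
  proof
    fix x :: "'a \<Rightarrow> complex" assume x: "x \<in> l2"
    have "conj_op S x = (\<lambda>k. cnj (\<Sum>w\<in>F. c w * word_op A w (\<lambda>k'. cnj (x k')) k))"
      unfolding conj_op_apply using F(3) l2_cnj[OF x] by simp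
    also have "\<dots> = (\<lambda>k. \<Sum>w\<in>F. cnj (c w) * conj_op (word_op A w) x k)"
      by (simp add: conj_op_apply)
    finally show "conj_op S x = (\<lambda>k. \<Sum>w\<in>F. cnj (c w) * word_op (\<lambda>i. conj_op (A i)) w x k)"
      by (simp only: conj_word)
  qed
  show ?thesis unfolding poly_alg_def
    by (rule CollectI, intro exI[of _ F] exI[of _ "\<lambda>w. cnj (c w)"] conjI F(1) F(2) repr)
qed

text \<open>Conjugation maps the C*-algebra generated by the A_i onto the one generated by their
  conjugates; the approximation estimates transfer since conjugation preserves norms.\<close>
lemma conj_cstar_gen:
  assumes T: "T \<in> cstar_gen m A"
  shows "conj_op T \<in> cstar_gen m (\<lambda>i. conj_op (A i))"
  unfolding cstar_gen_def
proof (intro CollectI conjI allI impI)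
  show "bounded_op (conj_op T)" using T by (simp add: cstar_gen_def conj_bop)
  fix e :: real assume e: "0 < e"
  obtain S where S: "S \<in> poly_alg m A" "\<forall>x\<in>l2. l2norm (\<lambda>k. T x k - S x k) \<le> e * l2norm x"
    using T e unfolding cstar_gen_def by blast
  have approx: "l2norm (\<lambda>k. conj_op T x k - conj_op S x k) \<le> e * l2norm x" if x: "x \<in> l2" for x
  proof -
    have "l2norm (\<lambda>k. conj_op T x k - conj_op S x k)
        = l2norm (\<lambda>k. T (\<lambda>k'. cnj (x k')) k - S (\<lambda>k'. cnj (x k')) k)"
      using l2norm_cnj[of "\<lambda>k. T (\<lambda>k'. cnj (x k')) k - S (\<lambda>k'. cnj (x k')) k"]
      by (simp add: conj_op_apply)
    also have "\<dots> \<le> e * l2norm (\<lambda>k'. cnj (x k'))" using S(2) l2_cnj[OF x] by blast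
    finally show ?thesis by (simp add: l2norm_cnj)
  qed
  show "\<exists>S'\<in>poly_alg m (\<lambda>i. conj_op (A i)). \<forall>x\<in>l2. l2norm (\<lambda>k. conj_op T x k - S' x k) \<le> e * l2norm x"
  proof (rule bexI[of _ "conj_op S"])
    show "\<forall>x\<in>l2. l2norm (\<lambda>k. conj_op T x k - conj_op S x k) \<le> e * l2norm x" using approx by blast
    show "conj_op S \<in> poly_alg m (\<lambda>i. conj_op (A i))" by (rule conj_poly_alg[OF S(1)])
  qed
qed

lemma cstar_gen_conj: "conj_op ` cstar_gen m A = cstar_gen m (\<lambda>i. conj_op (A i))"
proof
  show "conj_op ` cstar_gen m A \<subseteq> cstar_gen m (\<lambda>i. conj_op (A i))"
    by (rule image_subsetI) (rule conj_cstar_gen)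
  show "cstar_gen m (\<lambda>i. conj_op (A i)) \<subseteq> conj_op ` cstar_gen m A"
  proof
    fix T assume "T \<in> cstar_gen m (\<lambda>i. conj_op (A i))"
    hence "conj_op T \<in> cstar_gen m A" using conj_cstar_gen[of T m "\<lambda>i. conj_op (A i)"] by simp
    thus "T \<in> conj_op ` cstar_gen m A" using image_eqI[of T conj_op "conj_op T"] by simp
  qed
qed

lemma l2_pair_sum: "psi \<in> l2 \<Longrightarrow> (\<lambda>(k, l). (cmod (psi (k, l)))\<^sup>2) summable_on (UNIV \<times> UNIV)"
  by (simp add: l2_def case_prod_beta')

lemma l2_pair_row:
  assumes psi: "psi \<in> l2" shows "(\<lambda>l. psi (k, l)) \<in> l2"
proof -
  have "(\<lambda>(k, l). (cmod (psi (k, l)))\<^sup>2) summable_on Sigma UNIV (\<lambda>_. UNIV)"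
    using l2_pair_sum[OF psi] by simp
  from summable_on_SigmaD1[OF this, of k] show ?thesis by (simp add: l2_def)
qed

lemma l2_swap:
  assumes psi: "psi \<in> l2" shows "(\<lambda>(l, k). psi (k, l)) \<in> l2"
proof -
  have "(\<lambda>p. (cmod (psi p))\<^sup>2) summable_on (UNIV \<times> UNIV)" using psi by (simp add: l2_def)
  hence "(\<lambda>(l, k). (cmod (psi (k, l)))\<^sup>2) summable_on (UNIV \<times> UNIV)"
    by (subst (asm) summable_on_swap) simp
  thus ?thesis by (simp add: l2_def case_prod_beta')
qed

lemma l2_pair_col:
  assumes psi: "psi \<in> l2" shows "(\<lambda>k. psi (k, l)) \<in> l2"
  using l2_pair_row[OF l2_swap[OF psi], of l] by simp

text \<open>The squared column norms of psi are summable; this bounds lambda by Cauchy-Schwarz.\<close>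
lemma colsum_summable:
  assumes psi: "psi \<in> l2"
  shows "(\<lambda>l. infsum (\<lambda>k. (cmod (psi (k, l)))\<^sup>2) UNIV) summable_on UNIV"
proof -
  have "(\<lambda>(l, k). (cmod (psi (k, l)))\<^sup>2) summable_on Sigma UNIV (\<lambda>_. UNIV)"
    using l2_pair_sum[OF l2_swap[OF psi]] by simp
  from summable_on_SigmaD[OF this] show ?thesis
    using l2_pair_col[OF psi] by (simp add: l2_def)
qed

text \<open>lambda x is given columnwise by an inner product, so lambda maps l2 into l2.\<close>
lemma lam_as_inner: "lam psi x l = l2inner (\<lambda>k. cnj (x k)) (\<lambda>k. psi (k, l))"
  by (simp add: lam_def l2inner_def)

lemma l2norm_col_sq: "psi \<in> l2 \<Longrightarrow> (l2norm (\<lambda>k. psi (k, l)))\<^sup>2 = infsum (\<lambda>k. (cmod (psi (k, l)))\<^sup>2) UNIV"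
  by (rule l2norm_sq[OF l2_pair_col])

lemma lam_l2:
  assumes psi: "psi \<in> l2" and x: "x \<in> l2" shows "lam psi x \<in> l2"
  unfolding l2_def mem_Collect_eq
proof (rule summable_on_comparison_test)
  show "(\<lambda>l. (l2norm x)\<^sup>2 * infsum (\<lambda>k. (cmod (psi (k, l)))\<^sup>2) UNIV) summable_on UNIV"
    by (rule summable_on_cmult_right[OF colsum_summable[OF psi]])
  fix l
  have "cmod (lam psi x l) \<le> l2norm x * l2norm (\<lambda>k. psi (k, l))"
    unfolding lam_as_inner using l2_cauchy_schwarz[OF l2_cnj[OF x] l2_pair_col[OF psi]]
    by (simp add: l2norm_cnj)
  hence "(cmod (lam psi x l))\<^sup>2 \<le> (l2norm x * l2norm (\<lambda>k. psi (k, l)))\<^sup>2"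
    by (rule power_mono) simp
  thus "(cmod (lam psi x l))\<^sup>2 \<le> (l2norm x)\<^sup>2 * infsum (\<lambda>k. (cmod (psi (k, l)))\<^sup>2) UNIV"
    by (simp add: power_mult_distrib l2norm_col_sq[OF psi])
qed simp

definition delta :: "'a \<Rightarrow> 'a \<Rightarrow> complex" where "delta k0 = (\<lambda>k. if k = k0 then 1 else 0)"

lemma delta_l2: "delta k0 \<in> l2"
proof -
  have "(\<lambda>k. (cmod (delta k0 k))\<^sup>2) summable_on {k0}" by simp
  thus ?thesis unfolding l2_def mem_Collect_eq
    by (rule summable_on_cong_neutral[THEN iffD1, rotated -1]) (auto simp: delta_def)
qed

lemma lam_delta: "lam psi (delta k0) = (\<lambda>l. psi (k0, l))"
proof
  fix l
  have "infsum (\<lambda>k. delta k0 k * psi (k, l)) UNIV = infsum (\<lambda>k. delta k0 k * psi (k, l)) {k0}"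
    by (rule infsum_cong_neutral) (auto simp: delta_def)
  thus "lam psi (delta k0) l = psi (k0, l)" by (simp add: lam_def delta_def)
qed

text \<open>Fubini for <u, lambda x>: the double series is absolutely summable since it is dominated
  by products of square-summable families.\<close>
lemma prod_summable:
  fixes a :: "'a \<Rightarrow> real" and b :: "'b \<Rightarrow> real"
  assumes a: "a summable_on UNIV" "\<And>l. 0 \<le> a l" and b: "b summable_on UNIV" "\<And>k. 0 \<le> b k"
  shows "(\<lambda>(l, k). a l * b k) summable_on (UNIV \<times> UNIV)"
proof -
  have "(\<lambda>(l, k). a l * b k) summable_on Sigma UNIV (\<lambda>_. UNIV)"
  proof (rule summable_on_SigmaI)
    show "((\<lambda>k. case (l, k) of (l, k) \<Rightarrow> a l * b k) has_sum (a l * infsum b UNIV)) UNIV" for l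
      using has_sum_cmult_right[OF has_sum_infsum[OF b(1)], of "a l"] by simp
    show "(\<lambda>l. a l * infsum b UNIV) summable_on UNIV" by (rule summable_on_cmult_left[OF a(1)])
    show "\<And>l k. l \<in> UNIV \<Longrightarrow> k \<in> UNIV \<Longrightarrow> 0 \<le> (case (l, k) of (l, k) \<Rightarrow> a l * b k)"
      using a(2) b(2) by simp
  qed
  thus ?thesis by simp
qed

lemma lam_fubini_summable:
  assumes psi: "psi \<in> l2" and u: "u \<in> l2" and x: "x \<in> l2"
  shows "(\<lambda>(l, k). cnj (u l) * (x k * psi (k, l))) summable_on (UNIV \<times> UNIV)"
proof -
  define f where "f l k = cnj (u l) * (x k * psi (k, l))" for l k
  have g: "(\<lambda>(l, k). (cmod (u l))\<^sup>2 * (cmod (x k))\<^sup>2) summable_on (UNIV \<times> UNIV)"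
    by (rule prod_summable) (use u x in \<open>auto simp: l2_def\<close>)
  have h: "(\<lambda>(l, k). (cmod (psi (k, l)))\<^sup>2) summable_on (UNIV \<times> UNIV)"
    using l2_pair_sum[OF l2_swap[OF psi]] by simp
  have "(\<lambda>p. (case p of (l, k) \<Rightarrow> (cmod (u l))\<^sup>2 * (cmod (x k))\<^sup>2) + (case p of (l, k) \<Rightarrow> (cmod (psi (k, l)))\<^sup>2)) summable_on (UNIV \<times> UNIV)"
    by (rule summable_on_add[OF g h])
  from summable_on_cmult_left[OF this, of "1/2"]
  have gh: "(\<lambda>p. ((case p of (l, k) \<Rightarrow> (cmod (u l))\<^sup>2 * (cmod (x k))\<^sup>2) + (case p of (l, k) \<Rightarrow> (cmod (psi (k, l)))\<^sup>2)) / 2) summable_on (UNIV \<times> UNIV)"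
    by simp
  have "(\<lambda>p. norm (case p of (l, k) \<Rightarrow> f l k)) summable_on (UNIV \<times> UNIV)"
  proof (rule Infinite_Sum.abs_summable_on_comparison_test'[OF gh])
    fix p :: "'b \<times> 'a" obtain l k where p: "p = (l, k)" by (cases p)
    have "cmod (f l k) = (cmod (u l) * cmod (x k)) * cmod (psi (k, l))"
      by (simp add: f_def norm_mult)
    also have "\<dots> \<le> ((cmod (u l) * cmod (x k))\<^sup>2 + (cmod (psi (k, l)))\<^sup>2) / 2"
    proof -
      have "0 \<le> (cmod (u l) * cmod (x k) - cmod (psi (k, l)))\<^sup>2" by simp
      thus ?thesis by (simp add: power2_eq_square algebra_simps)
    qed
    finally show "norm (case p of (l, k) \<Rightarrow> f l k) \<le> ((case p of (l, k) \<Rightarrow> (cmod (u l))\<^sup>2 * (cmod (x k))\<^sup>2) + (case p of (l, k) \<Rightarrow> (cmod (psi (k, l)))\<^sup>2)) / 2"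
      by (simp add: p power_mult_distrib)
  qed
  hence "(\<lambda>(l, k). f l k) summable_on (UNIV \<times> UNIV)" by (rule abs_summable_summable)
  thus ?thesis by (simp add: f_def)
qed

lemma lam_inner_fubini:
  assumes psi: "psi \<in> l2" and u: "u \<in> l2" and x: "x \<in> l2"
  shows "l2inner u (lam psi x) = infsum (\<lambda>k. x k * l2inner u (\<lambda>l. psi (k, l))) UNIV"
proof -
  define f where "f l k = cnj (u l) * (x k * psi (k, l))" for l k
  have sw: "infsum (\<lambda>l. infsum (\<lambda>k. f l k) UNIV) UNIV = infsum (\<lambda>k. infsum (\<lambda>l. f l k) UNIV) UNIV"
    by (rule infsum_swap_banach) (use lam_fubini_summable[OF psi u x] in \<open>simp add: f_def\<close>)
  have lhs: "infsum (\<lambda>k. f l k) UNIV = cnj (u l) * lam psi x l" for l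
    unfolding f_def lam_def
    by (rule infsum_cmult_right) (rule l2_mult_summable[OF x l2_pair_col[OF psi]])
  have rhs: "infsum (\<lambda>l. f l k) UNIV = x k * l2inner u (\<lambda>l. psi (k, l))" for k
  proof -
    have "infsum (\<lambda>l. f l k) UNIV = infsum (\<lambda>l. x k * (cnj (u l) * psi (k, l))) UNIV"
      by (simp add: f_def algebra_simps)
    also have "\<dots> = x k * infsum (\<lambda>l. cnj (u l) * psi (k, l)) UNIV"
      by (rule infsum_cmult_right) (rule l2_inner_summable[OF u l2_pair_row[OF psi]])
    finally show ?thesis by (simp add: l2inner_def)
  qed
  show ?thesis using sw unfolding lhs rhs by (simp add: l2inner_def)
qed

lemma orth_proj_fixes:
  assumes Q: "orth_proj Q" and v: "v \<in> l2"
    and orth: "\<And>w. w \<in> l2 \<Longrightarrow> l2inner (\<lambda>l. w l - Q w l) v = 0"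
  shows "Q v = v"
proof -
  have Qb: "bounded_op Q" and Qsa: "\<And>a b. a \<in> l2 \<Longrightarrow> b \<in> l2 \<Longrightarrow> l2inner (Q a) b = l2inner a (Q b)"
    and Qi: "\<And>a. a \<in> l2 \<Longrightarrow> Q (Q a) = Q a"
    using Q by (auto simp: orth_proj_def self_adjoint_op_def)
  have Qv: "Q v \<in> l2" using bop_l2[OF Qb v] .
  define d where "d = (\<lambda>l. v l - Q v l)"
  have dl: "d \<in> l2" using l2_diff[OF v Qv] by (simp add: d_def)
  have Qd: "Q d = (\<lambda>l. 0)" using bop_diff[OF Qb v Qv] Qi[OF v] by (simp add: d_def)
  have "l2inner d d = l2inner d v - l2inner d (Q v)"
    unfolding d_def by (rule l2inner_diff_right[OF v Qv l2_diff[OF v Qv]])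
  also have "l2inner d v = 0" using orth[OF v] by (simp add: d_def)
  also have "l2inner d (Q v) = l2inner (Q d) v" using Qsa[OF dl v] by simp
  also have "\<dots> = 0" using Qd by (simp add: l2inner_zero_left)
  finally have "l2norm d = 0" using l2inner_self_eq[OF dl] by simp
  hence "d = (\<lambda>l. 0)" using l2norm_zero_iff[OF dl] by simp
  thus ?thesis unfolding d_def by (rule diff_zero_eq[symmetric])
qed

text \<open>An orthogonal projection fixing every row of psi fixes every vector lambda x: the
  range of I - Q is orthogonal to all rows, hence (by Fubini) to lambda x.\<close>
lemma proj_fixes_lam:
  assumes psi: "psi \<in> l2" and Q: "orth_proj Q" and rows: "\<And>k. Q (\<lambda>l. psi (k, l)) = (\<lambda>l. psi (k, l))"
    and x: "x \<in> l2"
  shows "Q (lam psi x) = lam psi x"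
proof (rule orth_proj_fixes[OF Q lam_l2[OF psi x]])
  have Qb: "bounded_op Q" and Qsa: "\<And>a b. a \<in> l2 \<Longrightarrow> b \<in> l2 \<Longrightarrow> l2inner (Q a) b = l2inner a (Q b)"
    and Qi: "\<And>a. a \<in> l2 \<Longrightarrow> Q (Q a) = Q a"
    using Q by (auto simp: orth_proj_def self_adjoint_op_def)
  fix w :: "'b \<Rightarrow> complex" assume w: "w \<in> l2"
  have Qw: "Q w \<in> l2" using bop_l2[OF Qb w] .
  have ul: "(\<lambda>l. w l - Q w l) \<in> l2" using l2_diff[OF w Qw] .
  have Qu: "Q (\<lambda>l. w l - Q w l) = (\<lambda>l. 0)" using bop_diff[OF Qb w Qw] Qi[OF w] by simp
  have z: "l2inner (\<lambda>l. w l - Q w l) (\<lambda>l. psi (k, l)) = 0" for k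
  proof -
    have "l2inner (\<lambda>l. w l - Q w l) (\<lambda>l. psi (k, l)) = l2inner (\<lambda>l. w l - Q w l) (Q (\<lambda>l. psi (k, l)))"
      using rows[of k] by simp
    also have "\<dots> = l2inner (Q (\<lambda>l. w l - Q w l)) (\<lambda>l. psi (k, l))"
      using Qsa[OF ul l2_pair_row[OF psi]] by simp
    also have "\<dots> = 0" using Qu by (simp add: l2inner_zero_left)
    finally show ?thesis .
  qed
  show "l2inner (\<lambda>l. w l - Q w l) (lam psi x) = 0"
    unfolding lam_inner_fubini[OF psi ul x] z by simp
qed

section \<open>The one-sided criterion\<close>

lemma tensor_right_iff:
  "tensor_right Q psi = psi \<longleftrightarrow> (\<forall>k. Q (\<lambda>l. psi (k, l)) = (\<lambda>l. psi (k, l)))"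
proof
  assume h: "tensor_right Q psi = psi"
  show "\<forall>k. Q (\<lambda>l. psi (k, l)) = (\<lambda>l. psi (k, l))"
  proof (intro allI ext)
    fix k l show "Q (\<lambda>l. psi (k, l)) l = psi (k, l)"
      using fun_cong[OF h, of "(k, l)"] by (simp add: tensor_right_def)
  qed
next
  assume "\<forall>k. Q (\<lambda>l. psi (k, l)) = (\<lambda>l. psi (k, l))"
  thus "tensor_right Q psi = psi" by (auto simp: tensor_right_def fun_eq_iff)
qed

definition lam_orbit :: "'l op set \<Rightarrow> ('k \<times> 'l \<Rightarrow> complex) \<Rightarrow> ('l \<Rightarrow> complex) set" where
  "lam_orbit Bs psi = {b (lam psi x) | b x. b \<in> Bs \<and> x \<in> l2}"

lemma lam_orbit_l2:
  assumes psi: "psi \<in> l2" and Bs: "\<And>b. b \<in> Bs \<Longrightarrow> bounded_op b"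
  shows "lam_orbit Bs psi \<subseteq> l2"
  using bop_l2[OF Bs lam_l2[OF psi]] by (auto simp: lam_orbit_def)

text \<open>If a nontrivial projection Q commuting with Bs satisfies (I (x) Q) psi = psi, the closed
  span of Bs lambda H1 consists of vectors fixed by Q, so it is not all of H2.\<close>
lemma degenerate_not_dense:
  assumes psi: "psi \<in> l2" and Bs: "\<And>b. b \<in> Bs \<Longrightarrow> bounded_op b"
    and Q: "orth_proj Q" "\<not> is_identity_op Q" "\<And>b. b \<in> Bs \<Longrightarrow> commutes_op Q b"
      "tensor_right Q psi = psi"
  shows "l2closure (cspan (lam_orbit Bs psi)) \<noteq> l2"
proof
  assume dense: "l2closure (cspan (lam_orbit Bs psi)) = l2"
  have Qb: "bounded_op Q" using Q(1) by (simp add: orth_proj_def self_adjoint_op_def)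
  have rows: "\<And>k. Q (\<lambda>l. psi (k, l)) = (\<lambda>l. psi (k, l))" using Q(4) tensor_right_iff[of Q psi] by simp
  have "lam_orbit Bs psi \<subseteq> {y\<in>l2. Q y = y}"
  proof
    fix y assume "y \<in> lam_orbit Bs psi"
    then obtain b x where y: "y = b (lam psi x)" "b \<in> Bs" "x \<in> l2" by (auto simp: lam_orbit_def)
    have v: "lam psi x \<in> l2" using lam_l2[OF psi y(3)] .
    have "Q (b (lam psi x)) = b (Q (lam psi x))"
      using Q(3)[OF y(2)] v by (simp add: commutes_op_def)
    also have "\<dots> = b (lam psi x)" using proj_fixes_lam[OF psi Q(1) rows y(3)] by simp
    finally show "y \<in> {y\<in>l2. Q y = y}" using y bop_l2[OF Bs[OF y(2)] v] by simp
  qed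
  hence "l2closure (cspan (lam_orbit Bs psi)) \<subseteq> {y\<in>l2. Q y = y}"
    by (rule l2closure_span_least[OF fixed_vectors_subspace[OF Qb]])
  hence "is_identity_op Q" using dense by (auto simp: is_identity_op_def)
  thus False using Q(2) by simp
qed

lemma fproj_commutes_invariant:
  assumes V: "l2_subspace V" "l2_closed V" and T: "self_adjoint_op T"
    and TV: "\<And>y. y \<in> V \<Longrightarrow> T y \<in> V"
  shows "commutes_op (fproj V) T"
  unfolding commutes_op_def
proof
  fix x :: "'a \<Rightarrow> complex" assume x: "x \<in> l2"
  have Tb: "bounded_op T" using T by (rule sa_bop)
  have Vx: "fproj V x \<in> V" "fproj V x \<in> l2" using fproj_in[OF V x] fproj_l2[OF V x] by auto
  show "fproj V (T x) = T (fproj V x)"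
  proof (rule fproj_unique[OF V bop_l2[OF Tb x] TV[OF Vx(1)]])
    fix z assume z: "z \<in> V"
    have zl: "z \<in> l2" using z l2_subspaceD(1)[OF V(1)] by blast
    have "l2inner (\<lambda>k. T x k - T (fproj V x) k) z = l2inner (T (\<lambda>k. x k - fproj V x k)) z"
      using bop_diff[OF Tb x Vx(2)] by simp
    also have "\<dots> = l2inner (\<lambda>k. x k - fproj V x k) (T z)"
      using T l2_diff[OF x Vx(2)] zl by (simp add: self_adjoint_op_def)
    also have "\<dots> = 0" by (rule fproj_orth[OF V x TV[OF z]])
    finally show "l2inner (\<lambda>k. T x k - T (fproj V x) k) z = 0" .
  qed
qed

text \<open>Conversely, if Bs contains the identity and is stable under left multiplication by the
  self-adjoint B_j, and Bs lambda H1 is not dense, the projection onto its closed span is a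
  nontrivial projection commuting with the B_j and fixing psi (it fixes the rows lambda|k>).\<close>
lemma not_dense_degenerate:
  assumes psi: "psi \<in> l2" and B: "\<And>j. j < n \<Longrightarrow> self_adjoint_op (B j)"
    and Bs: "\<And>b. b \<in> Bs \<Longrightarrow> bounded_op b" "(\<lambda>x. x) \<in> Bs"
      "\<And>j b. j < n \<Longrightarrow> b \<in> Bs \<Longrightarrow> B j \<circ> b \<in> Bs"
    and ne: "l2closure (cspan (lam_orbit Bs psi)) \<noteq> l2"
  shows "\<exists>Q. orth_proj Q \<and> \<not> is_identity_op Q \<and> (\<forall>j<n. commutes_op Q (B j)) \<and> tensor_right Q psi = psi"
proof -
  define S where "S = lam_orbit Bs psi"
  define V where "V = l2closure (cspan S)"
  have Sl: "S \<subseteq> l2" unfolding S_def by (rule lam_orbit_l2[OF psi Bs(1)])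
  have span_l2: "cspan S \<subseteq> l2" by (rule l2_subspaceD(1)[OF cspan_subspace[OF Sl]])
  have V: "l2_subspace V" "l2_closed V" unfolding V_def
    by (rule l2closure_subspace[OF cspan_subspace[OF Sl]], rule l2closure_closed[OF span_l2])
  have SV: "S \<subseteq> V" unfolding V_def
    using cspan_superset l2closure_superset[OF span_l2] by (rule order_trans)
  have comm: "commutes_op (fproj V) (B j)" if j: "j < n" for j
  proof (rule fproj_commutes_invariant[OF V B[OF j]])
    have "B j s \<in> V" if "s \<in> S" for s
    proof -
      obtain b x where s: "s = b (lam psi x)" "b \<in> Bs" "x \<in> l2"
        using \<open>s \<in> S\<close> by (auto simp: S_def lam_orbit_def)
      have "B j s = (B j \<circ> b) (lam psi x)" using s(1) by simp
      also have "\<dots> \<in> S" unfolding S_def lam_orbit_def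
        by (intro CollectI exI[of _ "B j \<circ> b"] exI[of _ x]) (simp add: Bs(3)[OF j s(2)] s(3))
      finally show ?thesis by (rule subsetD[OF SV])
    qed
    thus "\<And>y. y \<in> V \<Longrightarrow> B j y \<in> V"
      unfolding V_def by (rule l2closure_span_image[OF sa_bop[OF B[OF j]] V[unfolded V_def] Sl])
  qed
  have "(\<lambda>l. psi (k, l)) \<in> V" for k
  proof -
    have "(\<lambda>l. psi (k, l)) = (\<lambda>x. x) (lam psi (delta k))" by (simp add: lam_delta)
    also have "\<dots> \<in> S" unfolding S_def lam_orbit_def
      by (intro CollectI exI[of _ "\<lambda>x. x"] exI[of _ "delta k"]) (simp add: Bs(2) delta_l2)
    finally show ?thesis by (rule subsetD[OF SV])
  qed
  hence "tensor_right (fproj V) psi = psi" unfolding tensor_right_iff by (simp add: fproj_fix[OF V])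
  moreover have "\<not> is_identity_op (fproj V)" by (rule fproj_not_id[OF V]) (use ne in \<open>simp add: V_def S_def\<close>)
  ultimately show ?thesis using fproj_orth_proj[OF V] comm by (intro exI[of _ "fproj V"]) simp
qed

lemma degenerate_iff_not_dense:
  assumes psi: "psi \<in> l2" and B: "\<And>j. j < n \<Longrightarrow> self_adjoint_op (B j)"
  shows "(\<exists>Q. orth_proj Q \<and> \<not> is_identity_op Q \<and> (\<forall>j<n. commutes_op Q (B j)) \<and> tensor_right Q psi = psi)
     \<longleftrightarrow> l2closure (cspan (lam_orbit (cstar_gen n B) psi)) \<noteq> l2"
proof -
  have Bb: "\<And>j. j < n \<Longrightarrow> bounded_op (B j)" using B by (rule sa_bop)
  have Cb: "\<And>b. b \<in> cstar_gen n B \<Longrightarrow> bounded_op b" by (simp add: cstar_gen_def)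
  have comp: "\<And>j b. j < n \<Longrightarrow> b \<in> cstar_gen n B \<Longrightarrow> B j \<circ> b \<in> cstar_gen n B"
    by (rule cstar_comp[OF Bb])
  show ?thesis
  proof
    assume "\<exists>Q. orth_proj Q \<and> \<not> is_identity_op Q \<and> (\<forall>j<n. commutes_op Q (B j)) \<and> tensor_right Q psi = psi"
    then obtain Q where Q: "orth_proj Q" "\<not> is_identity_op Q" "\<forall>j<n. commutes_op Q (B j)"
      "tensor_right Q psi = psi" by blast
    have "commutes_op Q b" if "b \<in> cstar_gen n B" for b
      using cstar_comm[OF Bb _ _ that] Q(1,3) by (simp add: orth_proj_def self_adjoint_op_def)
    thus "l2closure (cspan (lam_orbit (cstar_gen n B) psi)) \<noteq> l2"
      using degenerate_not_dense[OF psi Cb Q(1,2) _ Q(4)] by blast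
  next
    assume ne: "l2closure (cspan (lam_orbit (cstar_gen n B) psi)) \<noteq> l2"
    show "\<exists>Q. orth_proj Q \<and> \<not> is_identity_op Q \<and> (\<forall>j<n. commutes_op Q (B j)) \<and> tensor_right Q psi = psi"
      by (rule not_dense_degenerate[where n=n and B=B and Bs="cstar_gen n B"])
        (fact psi, erule B, erule Cb, rule cstar_id, erule (1) comp, fact ne)
  qed
qed

section \<open>Reduction of the A side by conjugation\<close>

definition swap_conj :: "('k \<times> 'l \<Rightarrow> complex) \<Rightarrow> ('l \<times> 'k \<Rightarrow> complex)" where
  "swap_conj psi = (\<lambda>(l, k). cnj (psi (k, l)))"

lemma swap_conj_l2: "psi \<in> l2 \<Longrightarrow> swap_conj psi \<in> l2"
  using l2_cnj[OF l2_swap[of psi]] by (simp add: swap_conj_def case_prod_beta')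

lemma lam_swap_conj: "lam (swap_conj psi) = lam_adj psi"
  by (simp add: fun_eq_iff lam_def lam_adj_def swap_conj_def mult.commute)

lemma tensor_left_swap_conj:
  fixes P :: "'k op" and psi :: "'k \<times> 'l \<Rightarrow> complex"
  shows "tensor_right (conj_op P) (swap_conj psi) = swap_conj psi \<longleftrightarrow> tensor_left P psi = psi"
proof -
  have "tensor_right (conj_op P) (swap_conj psi) = swap_conj (tensor_left P psi)"
    by (simp add: fun_eq_iff swap_conj_def tensor_right_def tensor_left_def conj_op_apply)
  moreover have "swap_conj (swap_conj \<phi>) = \<phi>" for \<phi> :: "'k \<times> 'l \<Rightarrow> complex"
    by (simp add: swap_conj_def fun_eq_iff)
  ultimately show ?thesis by metis
qed

text \<open>Left degeneracy of (A, psi) is right degeneracy of (conj A, psi'), via P <-> conj_op P.\<close>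
lemma left_degenerate_iff_swap:
  "(\<exists>P. orth_proj P \<and> \<not> is_identity_op P \<and> (\<forall>i<m. commutes_op P (A i)) \<and> tensor_left P psi = psi)
   \<longleftrightarrow> (\<exists>Q. orth_proj Q \<and> \<not> is_identity_op Q \<and> (\<forall>i<m. commutes_op Q (conj_op (A i)))
          \<and> tensor_right Q (swap_conj psi) = swap_conj psi)"
proof
  assume "\<exists>P. orth_proj P \<and> \<not> is_identity_op P \<and> (\<forall>i<m. commutes_op P (A i)) \<and> tensor_left P psi = psi"
  then obtain P where "orth_proj P" "\<not> is_identity_op P" "\<forall>i<m. commutes_op P (A i)" "tensor_left P psi = psi"
    by blast
  thus "\<exists>Q. orth_proj Q \<and> \<not> is_identity_op Q \<and> (\<forall>i<m. commutes_op Q (conj_op (A i)))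
          \<and> tensor_right Q (swap_conj psi) = swap_conj psi"
    by (intro exI[of _ "conj_op P"]) (simp add: conj_orth conj_id_iff conj_comm_iff tensor_left_swap_conj)
next
  assume "\<exists>Q. orth_proj Q \<and> \<not> is_identity_op Q \<and> (\<forall>i<m. commutes_op Q (conj_op (A i)))
          \<and> tensor_right Q (swap_conj psi) = swap_conj psi"
  then obtain Q where Q: "orth_proj Q" "\<not> is_identity_op Q" "\<forall>i<m. commutes_op Q (conj_op (A i))"
    "tensor_right Q (swap_conj psi) = swap_conj psi" by blast
  show "\<exists>P. orth_proj P \<and> \<not> is_identity_op P \<and> (\<forall>i<m. commutes_op P (A i)) \<and> tensor_left P psi = psi"
    using Q conj_orth[OF Q(1)] conj_id_iff[of Q] conj_comm_iff[of "conj_op Q"]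
      tensor_left_swap_conj[of "conj_op Q" psi]
    by (intro exI[of _ "conj_op Q"]) simp
qed

theorem lemma4p2:
  fixes m n :: nat
    and A :: "nat \<Rightarrow> ('k::countable) op"
    and B :: "nat \<Rightarrow> ('l::countable) op"
    and psi :: "'k \<times> 'l \<Rightarrow> complex"
  assumes "quantum_strategy m A n B psi"
  shows "non_degenerate m A n B psi \<longleftrightarrow>
           l2closure (cspan {b (lam psi x) | b x. b \<in> cstar_gen n B \<and> x \<in> l2}) = l2
         \<and> l2closure (cspan {b (lam_adj psi y) | b y. b \<in> conj_op ` cstar_gen m A \<and> y \<in> l2}) = l2"
proof -
  have psi: "psi \<in> l2" and A: "\<And>i. i < m \<Longrightarrow> self_adjoint_op (A i)"
    and B: "\<And>j. j < n \<Longrightarrow> self_adjoint_op (B j)"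
    using assms by (auto simp: quantum_strategy_def)
  have A': "\<And>i. i < m \<Longrightarrow> self_adjoint_op (conj_op (A i))" using A by (rule conj_sa)
  have right: "(\<exists>Q. orth_proj Q \<and> \<not> is_identity_op Q \<and> (\<forall>j<n. commutes_op Q (B j)) \<and> tensor_right Q psi = psi)
      \<longleftrightarrow> l2closure (cspan {b (lam psi x) | b x. b \<in> cstar_gen n B \<and> x \<in> l2}) \<noteq> l2"
    using degenerate_iff_not_dense[where n=n and B=B, OF psi B] by (simp add: lam_orbit_def)
  have "(\<exists>P. orth_proj P \<and> \<not> is_identity_op P \<and> (\<forall>i<m. commutes_op P (A i)) \<and> tensor_left P psi = psi)
      \<longleftrightarrow> l2closure (cspan (lam_orbit (cstar_gen m (\<lambda>i. conj_op (A i))) (swap_conj psi))) \<noteq> l2"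
    using left_degenerate_iff_swap[of m A psi] degenerate_iff_not_dense[where n=m and B="\<lambda>i. conj_op (A i)", OF swap_conj_l2[OF psi] A']
    by simp
  hence left: "(\<exists>P. orth_proj P \<and> \<not> is_identity_op P \<and> (\<forall>i<m. commutes_op P (A i)) \<and> tensor_left P psi = psi)
      \<longleftrightarrow> l2closure (cspan {b (lam_adj psi y) | b y. b \<in> conj_op ` cstar_gen m A \<and> y \<in> l2}) \<noteq> l2"
    by (simp add: lam_orbit_def lam_swap_conj cstar_gen_conj)
  show ?thesis unfolding non_degenerate_def using left right by blast
qed

end
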